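(* Let $K\ge1$, $n_1,\ldots,n_K\ge2$, and let $A$ be a $K\times K$ symmetric positive definite matrix arising as the upper-left block of the canonical form of a nonsingular block correlation matrix, with $\lambda_k=(n_k-A_{kk})/(n_k-1)>0$. Define $\Lambda_\lambda=\mathrm{diag}(\lambda_1,\ldots,\lambda_K)$, $\Lambda_n=\mathrm{diag}(\sqrt{n_1},\ldots,\sqrt{n_K})$, $W=\log A-\log\Lambda_\lambda$, $\tilde C=\Lambda_n^{-1}W\Lambda_n^{-1}$ and $\eta=\mathrm{vech}(\tilde C)\in\mathbb R^{K(K+1)/2}$. Let $\Pi_A=\partial\mathrm{vec}(A)/\partial\eta'$. Then $$\Pi_A=\big[\Gamma_A-\Gamma_AE_d'(\Phi+E_d\Gamma_AE_d')^{-1}E_d\Gamma_A\big]\Lambda_{n\otimes}D_K,$$ where $\Phi$ is the $K\times K$ diagonal matrix with $\Phi_{kk}=\lambda_k(n_k-1)$, $\Lambda_{n\otimes}=\Lambda_n\otimes\Lambda_n$, and $\Gamma_A=\partial\mathrm{vec}(A)/\partial\mathrm{vec}(\log A)'$.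
   Context: Block correlation setting: variables are partitioned into $K$ consecutive groups of sizes $n_1,\ldots,n_K$, $n=\sum n_k$; a block correlation matrix $C$ has all entries of its $(k,l)$ block equal to $\rho_{kl}$, except unit diagonal. Then $C=QDQ'$ with $D=\mathrm{blockdiag}(A,\lambda_1I_{n_1-1},\ldots,\lambda_KI_{n_K-1})$, $A_{kl}=\rho_{kl}\sqrt{n_kn_l}$ ($k\ne l$), $A_{kk}=1+(n_k-1)\rho_{kk}$, $\lambda_k=(n_k-A_{kk})/(n_k-1)$, and $Q$ an orthogonal matrix depending only on $(n_1,\ldots,n_K)$. $\log$ denotes the matrix logarithm; $\mathrm{vech}$ stacks the lower triangle including the diagonal. $D_K$ is the $K^2\times K(K+1)/2$ duplication matrix ($D_K\mathrm{vech}(B)=\mathrm{vec}(B)$ for symmetric $B$); $E_d$ is the $K\times K^2$ matrix with $E_d\mathrm{vec}(B)=\mathrm{diag}(B)$. $\Gamma_A$ is the Jacobian of the matrix exponential at $\log A$: if $\log A=P\,\mathrm{diag}(a_1,\ldots,a_K)P'$ with $P$ orthonormal, $\Gamma_A=(P\otimes P)\Xi_A(P\otimes P)'$, $\Xi_A$ diagonal with $(i-1)K+j$-th entry $e^{a_i}$ if $a_i=a_j$ and $(e^{a_i}-e^{a_j})/(a_i-a_j)$ otherwise. *)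

theory Defs
  imports "HOL-Analysis.Analysis"
begin

(* Index type for vech: pairs (j,i) = (column j, row i) with j <= i, i.e. the
   lower triangle including the diagonal. Its cardinality is K(K+1)/2. *)
typedef (overloaded) ('k::linorder) vh = "{p::'k \<times> 'k. fst p \<le> snd p}"
  by (rule exI[of _ "(undefined, undefined)"]) simp

instance vh :: ("{finite,linorder}") finite
proof
  have s: "range (Abs_vh :: 'a \<times> 'a \<Rightarrow> 'a vh) = UNIV"
    by (metis Abs_vh_cases surj_def)
  have "finite (range (Abs_vh :: 'a \<times> 'a \<Rightarrow> 'a vh))"
    by (rule finite_imageI) simp
  then show "finite (UNIV :: 'a vh set)" by (simp only: s)
qed

definition mdiag :: "real^'k \<Rightarrow> real^'k^'k" where
  "mdiag d = (\<chi> i j. if i = j then d $ i else 0)"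

definition posdef :: "real^'k^'k \<Rightarrow> bool" where
  "posdef A \<longleftrightarrow> transpose A = A \<and> (\<forall>x. x \<noteq> 0 \<longrightarrow> x \<bullet> (A *v x) > 0)"

definition matlog :: "real^'k^'k \<Rightarrow> real^'k^'k" where
  "matlog A = (THE L. \<exists>P d. orthogonal_matrix P \<and> (\<forall>i. d $ i > 0) \<and>
       A = P ** mdiag d ** transpose P \<and> L = P ** mdiag (\<chi> i. ln (d $ i)) ** transpose P)"

(* vec: column-major stacking. Index (c,r) = (column c, row r); with pairs
   ordered lexicographically this is position (c-1)K + r. *)
definition vecm :: "real^'k^'k \<Rightarrow> real^('k \<times> 'k)" where
  "vecm B = (\<chi> p. B $ snd p $ fst p)"

definition vech :: "((real, 'k::{finite,linorder}) vec, 'k) vec \<Rightarrow> (real, 'k vh) vec" where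
  "vech B = (\<chi> v. B $ snd (Rep_vh v) $ fst (Rep_vh v))"

(* Kronecker product, consistent with the column-major vec above:
   (P \<otimes> Q) at ((a,b),(c,d)) = P_ac Q_bd *)
definition kron :: "real^'k^'k \<Rightarrow> real^'k^'k \<Rightarrow> real^('k \<times> 'k)^('k \<times> 'k)" where
  "kron P Q = (\<chi> p q. P $ fst p $ fst q * Q $ snd p $ snd q)"

(* duplication matrix D_K: D_K vech(B) = vec(B) for symmetric B *)
definition dupmat :: "((real, 'k::{finite,linorder} vh) vec, 'k \<times> 'k) vec" where
  "dupmat = (\<chi> p v. if p = Rep_vh v \<or> p = prod.swap (Rep_vh v) then 1 else 0)"

(* E_d: E_d vec(B) = diag(B) *)
definition Edmat :: "real^('k \<times> 'k)^'k" where
  "Edmat = (\<chi> i p. if p = (i, i) then 1 else 0)"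

definition lam :: "('k \<Rightarrow> nat) \<Rightarrow> real^'k^'k \<Rightarrow> real^'k" where
  "lam n A = (\<chi> k. (real (n k) - A $ k $ k) / (real (n k) - 1))"

definition Xi :: "real^'k \<Rightarrow> real^('k \<times> 'k)" where
  "Xi a = (\<chi> p. if a $ fst p = a $ snd p then exp (a $ fst p)
               else (exp (a $ fst p) - exp (a $ snd p)) / (a $ fst p - a $ snd p))"

definition GammaA :: "real^'k^'k \<Rightarrow> real^('k \<times> 'k)^('k \<times> 'k)" where
  "GammaA A = (SOME G. \<exists>P a. orthogonal_matrix P \<and> matlog A = P ** mdiag a ** transpose P \<and>
       G = kron P P ** mdiag (Xi a) ** transpose (kron P P))"

definition Lamn :: "('k \<Rightarrow> nat) \<Rightarrow> real^'k^'k" where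
  "Lamn n = mdiag (\<chi> k. sqrt (real (n k)))"

definition etaOf :: "('k::{finite,linorder} \<Rightarrow> nat) \<Rightarrow> ((real, 'k) vec, 'k) vec \<Rightarrow> (real, 'k vh) vec" where
  "etaOf n A = vech (matrix_inv (Lamn n) ** (matlog A - matlog (mdiag (lam n A)))
                     ** matrix_inv (Lamn n))"

definition Phimat :: "('k \<Rightarrow> nat) \<Rightarrow> real^'k^'k \<Rightarrow> real^'k^'k" where
  "Phimat n A = mdiag (\<chi> k. lam n A $ k * (real (n k) - 1))"

definition PiA :: "('k::{finite,linorder} \<Rightarrow> nat) \<Rightarrow> ((real, 'k) vec, 'k) vec \<Rightarrow> ((real, 'k vh) vec, 'k \<times> 'k) vec" where
  "PiA n A = (GammaA A - GammaA A ** transpose Edmat **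
                 matrix_inv (Phimat n A + Edmat ** GammaA A ** transpose Edmat) ** Edmat ** GammaA A)
              ** kron (Lamn n) (Lamn n) ** dupmat"

end

(*
  Write L = log A, a symmetric matrix. Since lambda_k depends on A only through A_kk, eta is a
  smooth function of vech L alone, namely
    F(L) = Lambda_n^-1 (L - diag(ln lambda(exp L))) Lambda_n^-1,
  whose derivative is dL |-> Lambda_n^-1 (dL + diag(dA_kk / Phi_kk)) Lambda_n^-1, where
  vec(dA) = Gamma_A vec(dL) by the Daleckii-Krein formula for the derivative of the matrix
  exponential. This derivative is inverted explicitly: given d eta, let z = vec(Lambda_n d eta
  Lambda_n); the diagonal correction t = (dA_kk / Phi_kk)_k satisfies
  E_d Gamma_A (z - E_d' t) = Phi t, so t = (Phi + E_d Gamma_A E_d')^-1 E_d Gamma_A z, the matrix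
  being invertible because Gamma_A is positive semidefinite. The inverse function theorem then
  differentiates eta |-> vech(log A), and composing with exp gives
  vec(dA) = Gamma_A (z - E_d' t) = Pi_A d eta.

  Exp and log of symmetric matrices are computed through the spectral theorem (an orthonormal
  eigenbasis is built by repeatedly maximising the Rayleigh quotient), and log is continuous
  because exp is a continuous injection on compact sets of symmetric matrices.
*)

theory Submission
  imports Defs
begin

lemma mdiag_nth [simp]: "mdiag d $ i $ j = (if i = j then d $ i else 0)"
  by (simp add: mdiag_def)

lemma transpose_mdiag [simp]: "transpose (mdiag d) = mdiag d"
  by (simp add: transpose_def vec_eq_iff)

lemma mdiag_mult_nth: "(mdiag d ** X) $ i $ j = d $ i * X $ i $ j"
  by (simp add: matrix_matrix_mult_def if_distrib if_distribR cong: if_cong)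

lemma mult_mdiag_nth: "(X ** mdiag d) $ i $ j = X $ i $ j * d $ j"
  by (simp add: matrix_matrix_mult_def if_distrib if_distribR cong: if_cong)

lemma mdiag_mult_vector: "mdiag d *v v = d * v"
  by (simp add: vec_eq_iff matrix_vector_mult_def if_distrib if_distribR cong: if_cong)

lemma mdiag_mult_mdiag: "mdiag a ** mdiag b = mdiag (a * b)"
  by (simp add: vec_eq_iff mdiag_mult_nth)

lemma mdiag_1: "mdiag 1 = mat 1"
  by (simp add: vec_eq_iff mat_def)

lemma mdiag_add: "mdiag (a + b) = mdiag a + mdiag b"
  by (simp add: vec_eq_iff)

lemma mdiag_scaleR: "mdiag (r *\<^sub>R a) = r *\<^sub>R mdiag a"
  by (simp add: vec_eq_iff)

lemma bounded_linear_mdiag: "bounded_linear (mdiag :: real^'k \<Rightarrow> real^'k^'k)"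
  unfolding linear_conv_bounded_linear[symmetric]
  by (rule linearI) (simp_all add: mdiag_add mdiag_scaleR)

lemma matrix_add_rdistrib: "(B + C) ** A = B ** A + C ** (A :: real^'k^'k)"
  by (simp add: vec_eq_iff matrix_matrix_mult_def sum.distrib[symmetric] algebra_simps)

lemma matrix_diff_ldistrib: "A ** (B - C) = A ** B - A ** (C :: real^'k^'k)"
  by (simp add: vec_eq_iff matrix_matrix_mult_def sum_subtractf[symmetric] algebra_simps)

lemma transpose_add: "transpose (X + Y) = transpose X + transpose Y"
  by (simp add: vec_eq_iff transpose_def)

lemma transpose_diff: "transpose (X - Y) = transpose X - transpose Y"
  by (simp add: vec_eq_iff transpose_def)

lemma bounded_linear_matrix_sandwich: "bounded_linear (\<lambda>M. X ** M ** (Y :: real^'k^'k))"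
  unfolding linear_conv_bounded_linear[symmetric]
  by (rule linearI)
    (simp_all add: matrix_add_ldistrib matrix_add_rdistrib matrix_scalar_ac scalar_matrix_assoc)

lemma bounded_linear_matrix_vector_mult: "bounded_linear (\<lambda>x. (M :: real^'m^'n) *v x)"
  using matrix_vector_mul_linear[of M] by (simp add: linear_conv_bounded_linear)

lemma bounded_linear_transpose: "bounded_linear (transpose :: real^'k^'k \<Rightarrow> real^'k^'k)"
  unfolding linear_conv_bounded_linear[symmetric]
  by (rule linearI) (simp_all add: vec_eq_iff transpose_def)

lemma transpose_sandwich_mdiag:
  "transpose M = M \<Longrightarrow> transpose (mdiag a ** M ** mdiag a) = mdiag a ** M ** mdiag a"
  by (simp add: matrix_transpose_mul matrix_mul_assoc)

lemma matrix_inv_invertible: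
  assumes "invertible (M :: real^'n^'n)"
  shows "M ** matrix_inv M = mat 1" and "matrix_inv M ** M = mat 1"
  using someI_ex[OF assms[unfolded invertible_def]] by (simp_all add: matrix_inv_def)

lemma matrix_inv_mdiag:
  assumes "\<forall>k. d $ k \<noteq> 0"
  shows "matrix_inv (mdiag d :: real^'k^'k) = mdiag (\<chi> k. 1 / d $ k)"
proof -
  let ?D = "mdiag (\<chi> k. 1 / d $ k) :: real^'k^'k"
  have r: "mdiag d ** ?D = mat 1" and l: "?D ** mdiag d = mat 1"
    using assms by (simp_all add: mdiag_mult_mdiag mdiag_1[symmetric] vec_eq_iff)
  then have "invertible (mdiag d)" unfolding invertible_def by blast
  then have "matrix_inv (mdiag d) ** mdiag d = mat 1" by (rule matrix_inv_invertible)
  then have "matrix_inv (mdiag d) ** (mdiag d ** ?D) = ?D" by (simp add: matrix_mul_assoc)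
  then show ?thesis using r by simp
qed

lemma orthogonal_matrixD:
  assumes "orthogonal_matrix P"
  shows "P ** transpose P = mat 1" and "transpose P ** P = mat 1"
  using assms by (simp_all add: orthogonal_matrix_def)

lemma orthogonal_cancel_left:
  assumes "orthogonal_matrix P"
  shows "transpose P ** (P ** Z) = Z" and "P ** (transpose P ** Z) = Z"
  using orthogonal_matrixD[OF assms] by (simp_all add: matrix_mul_assoc)

lemma orthogonal_conj_mult:
  "orthogonal_matrix P \<Longrightarrow>
    (P ** X ** transpose P) ** (P ** Y ** transpose P) = P ** (X ** Y) ** transpose P"
  by (simp add: matrix_mul_assoc[symmetric] orthogonal_cancel_left)

lemma conj_add: "P ** X ** transpose P + P ** Y ** transpose P = P ** (X + Y) ** transpose P"
  for P :: "real^'k^'k"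
  by (simp add: matrix_add_ldistrib matrix_add_rdistrib)

lemma conj_scaleR: "r *\<^sub>R (P ** X ** transpose P) = P ** (r *\<^sub>R X) ** transpose P"
  for P :: "real^'k^'k"
  by (simp add: matrix_scalar_ac scalar_matrix_assoc)

lemma transpose_conj_mdiag: "transpose (P ** mdiag a ** transpose P) = P ** mdiag a ** transpose P"
  for P :: "real^'k^'k"
  by (simp add: matrix_transpose_mul matrix_mul_assoc)

lemma orthogonal_conj_mdiag_eigenvector:
  fixes P :: "real^'k^'k"
  assumes P: "orthogonal_matrix P"
  shows "norm (P *v axis i 1) = 1"
    and "(P ** mdiag d ** transpose P) *v (P *v axis i 1) = d $ i *\<^sub>R (P *v axis i 1)"
proof -
  have "P *v axis i 1 v* P = axis i 1"
    by (simp flip: transpose_matrix_vector add: matrix_vector_mul_assoc orthogonal_matrixD(2)[OF P])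
  moreover have "(P *v axis i 1) \<bullet> (P *v axis i 1) = (P *v axis i 1 v* P) \<bullet> axis i 1"
    by (simp add: dot_lmul_matrix)
  ultimately show "norm (P *v axis i 1) = 1" by (simp add: norm_eq_1 inner_axis_axis)
  have "P ** mdiag d ** transpose P ** P = P ** mdiag d"
    by (simp add: matrix_mul_assoc[symmetric] orthogonal_matrixD(2)[OF P])
  moreover have "mdiag d *v axis i 1 = d $ i *\<^sub>R axis i 1"
    by (simp add: mdiag_mult_vector vec_eq_iff axis_def)
  ultimately show "(P ** mdiag d ** transpose P) *v (P *v axis i 1) = d $ i *\<^sub>R (P *v axis i 1)"
    by (metis matrix_vector_mul_assoc matrix_vector_mult_scaleR)
qed

subsection \<open>The spectral theorem for real symmetric matrices\<close>

lemma inner_symmetric_matrix: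
  fixes L :: "real^'k^'k"
  assumes "transpose L = L"
  shows "x \<bullet> (L *v y) = (L *v x) \<bullet> y"
  by (metis assms dot_lmul_matrix transpose_matrix_vector)

lemma linear_le_quadratic_imp_nonpos:
  fixes a c :: real
  assumes "\<And>t. 2 * t * a \<le> t * t * c"
  shows "a \<le> 0"
proof (rule ccontr)
  assume "\<not> a \<le> 0"
  define t where "t = a / (\<bar>c\<bar> + 1)"
  have t: "t > 0" using \<open>\<not> a \<le> 0\<close> by (simp add: t_def)
  have "t * (2 * a) \<le> t * (t * c)" using assms[of t] by (simp add: mult.assoc mult.left_commute)
  then have "2 * a \<le> t * c" using t by simp
  also have "\<dots> \<le> t * \<bar>c\<bar>" using t by (simp add: mult_left_mono)
  also have "\<dots> < a" using \<open>\<not> a \<le> 0\<close> by (simp add: t_def field_simps)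
  finally show False using \<open>\<not> a \<le> 0\<close> by simp
qed

text \<open>Moving from the maximiser \<open>v\<close> of the Rayleigh quotient in direction
  \<open>w = L v - \<mu> v\<close> would raise the quotient at first order by \<open>2 t \<parallel>w\<parallel>\<^sup>2\<close>;
  hence \<open>w = 0\<close>.\<close>

lemma rayleigh_maximiser_eigenvector:
  fixes L :: "real^'k^'k"
  assumes sym: "transpose L = L" and V: "subspace V" and inv: "\<And>x. x \<in> V \<Longrightarrow> L *v x \<in> V"
    and v: "v \<in> V" "v \<bullet> v = 1"
    and max: "\<And>x. x \<in> V \<Longrightarrow> x \<bullet> (L *v x) \<le> (v \<bullet> (L *v v)) * (x \<bullet> x)"
  shows "L *v v = (v \<bullet> (L *v v)) *\<^sub>R v"
proof -
  define \<mu> where "\<mu> = v \<bullet> (L *v v)"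
  define w where "w = L *v v - \<mu> *\<^sub>R v"
  have w: "w \<in> V" unfolding w_def using V v inv by (simp add: subspace_diff subspace_scale)
  define c where "c = \<mu> * (w \<bullet> w) - w \<bullet> (L *v w)"
  have "2 * t * (w \<bullet> w) \<le> t * t * c" for t
  proof -
    have "v + t *\<^sub>R w \<in> V" using V v w by (simp add: subspace_add subspace_scale)
    then have le: "(v + t *\<^sub>R w) \<bullet> (L *v (v + t *\<^sub>R w)) \<le> \<mu> * ((v + t *\<^sub>R w) \<bullet> (v + t *\<^sub>R w))"
      unfolding \<mu>_def by (rule max)
    have Lv: "L *v v = w + \<mu> *\<^sub>R v" by (simp add: w_def)
    have wLv: "w \<bullet> (L *v v) = w \<bullet> w + \<mu> * (w \<bullet> v)" by (simp add: Lv inner_add_right)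
    have vLw: "v \<bullet> (L *v w) = w \<bullet> (L *v v)"
      using inner_symmetric_matrix[OF sym, of v w] by (simp add: inner_commute)
    have "(v + t *\<^sub>R w) \<bullet> (L *v (v + t *\<^sub>R w)) =
        v \<bullet> (L *v v) + t * (v \<bullet> (L *v w)) + t * (w \<bullet> (L *v v)) + t * (t * (w \<bullet> (L *v w)))"
      by (simp add: matrix_vector_right_distrib matrix_vector_mult_scaleR inner_add_left
          inner_add_right ring_distribs)
    also have "\<dots> = \<mu> + 2 * t * (w \<bullet> w + \<mu> * (w \<bullet> v)) + t * t * (w \<bullet> (L *v w))"
      unfolding vLw wLv \<mu>_def[symmetric] by (simp add: algebra_simps)
    finally have e1: "(v + t *\<^sub>R w) \<bullet> (L *v (v + t *\<^sub>R w)) =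
        \<mu> + 2 * t * (w \<bullet> w + \<mu> * (w \<bullet> v)) + t * t * (w \<bullet> (L *v w))" .
    have e2: "(v + t *\<^sub>R w) \<bullet> (v + t *\<^sub>R w) = 1 + 2 * t * (w \<bullet> v) + t * t * (w \<bullet> w)"
      using v(2) by (simp add: inner_add_left inner_add_right inner_commute[of v w] algebra_simps)
    show ?thesis using le unfolding e1 e2 c_def by (simp add: algebra_simps)
  qed
  then have "w \<bullet> w \<le> 0" by (rule linear_le_quadratic_imp_nonpos)
  then have "w = 0" by (metis inner_eq_zero_iff inner_ge_zero order_antisym)
  then show ?thesis by (simp add: w_def \<mu>_def)
qed

lemma rayleigh_maximiser_exists:
  fixes L :: "real^'k^'k"
  assumes V: "subspace V" and x0: "x0 \<in> V" "x0 \<noteq> 0"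
  obtains v where "v \<in> V" "v \<bullet> v = 1" "\<And>x. x \<in> V \<Longrightarrow> x \<bullet> (L *v x) \<le> (v \<bullet> (L *v v)) * (x \<bullet> x)"
proof -
  define U where "U = V \<inter> sphere 0 1"
  have "compact U" unfolding U_def by (intro closed_Int_compact closed_subspace V compact_sphere)
  moreover have "(1 / norm x0) *\<^sub>R x0 \<in> U"
    using x0 V by (simp add: U_def subspace_scale)
  moreover have "continuous_on U (\<lambda>x. x \<bullet> (L *v x))"
    by (intro continuous_intros linear_continuous_on bounded_linear_matrix_vector_mult)
  ultimately obtain v where vU: "v \<in> U" and vmax: "\<And>y. y \<in> U \<Longrightarrow> y \<bullet> (L *v y) \<le> v \<bullet> (L *v v)"
    using continuous_attains_sup[of U "\<lambda>x. x \<bullet> (L *v x)"] by blast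
  have "x \<bullet> (L *v x) \<le> (v \<bullet> (L *v v)) * (x \<bullet> x)" if "x \<in> V" for x
  proof (cases "x = 0")
    case False
    define u where "u = (1 / norm x) *\<^sub>R x"
    have "u \<in> U" using that False V by (simp add: U_def u_def subspace_scale)
    then have "u \<bullet> (L *v u) \<le> v \<bullet> (L *v v)" by (rule vmax)
    moreover have "u \<bullet> (L *v u) = (x \<bullet> (L *v x)) / (x \<bullet> x)"
      by (simp add: u_def matrix_vector_mult_scaleR power2_norm_eq_inner[symmetric] power2_eq_square)
    ultimately show ?thesis using False by (simp add: divide_le_eq mult.commute)
  qed simp
  then show ?thesis using that vU by (auto simp: U_def norm_eq_1)
qed

lemma symmetric_eigenvector_orthogonal_to:
  fixes L :: "real^'k^'k" and B :: "(real^'k) set"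
  assumes sym: "transpose L = L" and fin: "finite B" and card: "card B < CARD('k)"
    and eig: "\<forall>b\<in>B. \<exists>\<mu>. L *v b = \<mu> *\<^sub>R b"
  shows "\<exists>v. norm v = 1 \<and> (\<forall>b\<in>B. b \<bullet> v = 0) \<and> (\<exists>\<mu>. L *v v = \<mu> *\<^sub>R v)"
proof -
  define V where "V = orthogonal_comp B"
  have V: "subspace V" unfolding V_def by (rule subspace_orthogonal_comp)
  have inv: "L *v x \<in> V" if "x \<in> V" for x
  proof -
    have "b \<bullet> (L *v x) = 0" if "b \<in> B" for b
    proof -
      obtain \<mu> where "L *v b = \<mu> *\<^sub>R b" using eig \<open>b \<in> B\<close> by blast
      then show ?thesis using \<open>x \<in> V\<close> \<open>b \<in> B\<close> inner_symmetric_matrix[OF sym, of b x]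
        by (simp add: V_def orthogonal_comp_def orthogonal_def)
    qed
    then show ?thesis by (simp add: V_def orthogonal_comp_def orthogonal_def)
  qed
  have "dim B < DIM(real^'k)" using card dim_le_card'[OF fin] by simp
  then obtain x0 :: "real^'k" where "x0 \<noteq> 0" "\<And>y. y \<in> span B \<Longrightarrow> orthogonal x0 y"
    using orthogonal_to_subspace_exists by blast
  then have "x0 \<in> V" "x0 \<noteq> 0"
    using span_base by (auto simp: V_def orthogonal_comp_def orthogonal_commute)
  then obtain v where v: "v \<in> V" "v \<bullet> v = 1"
    and max: "\<And>x. x \<in> V \<Longrightarrow> x \<bullet> (L *v x) \<le> (v \<bullet> (L *v v)) * (x \<bullet> x)"
    using rayleigh_maximiser_exists[OF V] by blast
  have "L *v v = (v \<bullet> (L *v v)) *\<^sub>R v"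
    using rayleigh_maximiser_eigenvector[OF sym V inv v max] by blast
  then show ?thesis using v by (auto simp: V_def orthogonal_comp_def orthogonal_def norm_eq_1)
qed

lemma symmetric_orthonormal_eigenvectors:
  fixes L :: "real^'k^'k"
  assumes sym: "transpose L = L" and "m \<le> CARD('k)"
  shows "\<exists>B. finite B \<and> card B = m \<and> (\<forall>b\<in>B. norm b = 1) \<and> pairwise orthogonal B \<and>
           (\<forall>b\<in>B. \<exists>\<mu>. L *v b = \<mu> *\<^sub>R b)"
  using \<open>m \<le> CARD('k)\<close>
proof (induction m)
  case 0
  show ?case by (rule exI[of _ "{}"]) simp
next
  case (Suc m)
  then obtain B where B: "finite B" "card B = m" "\<forall>b\<in>B. norm b = 1" "pairwise orthogonal B"
    "\<forall>b\<in>B. \<exists>\<mu>. L *v b = \<mu> *\<^sub>R b"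
    by auto
  obtain v where v: "norm v = 1" "\<forall>b\<in>B. b \<bullet> v = 0" "\<exists>\<mu>. L *v v = \<mu> *\<^sub>R v"
    using symmetric_eigenvector_orthogonal_to[OF sym B(1) _ B(5)] B(2) Suc.prems by auto
  have "v \<notin> B" using v(1,2) by (auto simp: norm_eq_1)
  then show ?case using B v
    by (intro exI[of _ "insert v B"])
      (auto simp: pairwise_insert pairwise_def orthogonal_def inner_commute)
qed

theorem symmetric_matrix_diagonalizable:
  fixes L :: "real^'k^'k"
  assumes sym: "transpose L = L"
  shows "\<exists>P a. orthogonal_matrix P \<and> L = P ** mdiag a ** transpose P"
proof -
  obtain B where B: "finite B" "card B = CARD('k)" "\<forall>b\<in>B. norm b = 1" "pairwise orthogonal B"
    "\<forall>b\<in>B. \<exists>\<mu>. L *v b = \<mu> *\<^sub>R b"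
    using symmetric_orthonormal_eigenvectors[OF sym order_refl] by blast
  obtain b :: "'k \<Rightarrow> real^'k" where bij: "bij_betw b UNIV B"
    using finite_same_card_bij[of "UNIV :: 'k set" B] B(1,2) by auto
  define a where "a = (\<chi> j. SOME \<mu>. L *v b j = \<mu> *\<^sub>R b j)"
  have eig: "L *v b j = (a $ j) *\<^sub>R b j" for j
    unfolding a_def using B(5) bij_betwE[OF bij] by (simp, metis (mono_tags) someI_ex)
  define P where "P = (\<chi> i j. b j $ i)"
  have "(transpose P ** P) $ i $ j = b i \<bullet> b j" for i j
    by (simp add: matrix_matrix_mult_def transpose_def P_def inner_vec_def)
  moreover have "b i \<bullet> b j = (if i = j then 1 else 0)" for i j
    using B(3,4) bij_betwE[OF bij] bij_betw_imp_inj_on[OF bij]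
    by (simp add: norm_eq_1 pairwise_def orthogonal_def inj_on_def) metis
  ultimately have P: "orthogonal_matrix P" by (simp add: orthogonal_matrix vec_eq_iff mat_def)
  have "(L ** P) $ i $ j = (L *v b j) $ i" for i j
    by (simp add: matrix_matrix_mult_def matrix_vector_mult_def P_def)
  then have "L ** P = P ** mdiag a"
    using eig by (simp add: vec_eq_iff mult_mdiag_nth P_def mult.commute)
  then have "L = P ** mdiag a ** transpose P"
    by (metis P matrix_mul_assoc matrix_mul_rid orthogonal_matrixD(1))
  then show ?thesis using P by blast
qed

lemma posdef_diagonalizable:
  fixes B :: "real^'k^'k"
  assumes "posdef B"
  shows "\<exists>P d. orthogonal_matrix P \<and> (\<forall>i. d $ i > 0) \<and> B = P ** mdiag d ** transpose P"
proof -
  obtain P d where P: "orthogonal_matrix P" and B: "B = P ** mdiag d ** transpose P"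
    using symmetric_matrix_diagonalizable assms unfolding posdef_def by blast
  have "d $ i > 0" for i
  proof -
    define x where "x = P *v axis i 1"
    have "x \<noteq> 0" "B *v x = d $ i *\<^sub>R x"
      using orthogonal_conj_mdiag_eigenvector[OF P, where i = i] by (auto simp: x_def B)
    then have "0 < d $ i * (x \<bullet> x)" and "0 < x \<bullet> x"
      using assms unfolding posdef_def by (metis inner_scaleR_right, simp)
    then show ?thesis by (simp add: zero_less_mult_iff)
  qed
  then show ?thesis using P B by blast
qed

lemma orthogonal_conj_mdiag_fun_eq:
  fixes P Q :: "real^'k^'k"
  assumes P: "orthogonal_matrix P" and Q: "orthogonal_matrix Q"
    and eq: "P ** mdiag d ** transpose P = Q ** mdiag e ** transpose Q"
  shows "P ** mdiag (\<chi> i. f (d $ i)) ** transpose P = Q ** mdiag (\<chi> i. f (e $ i)) ** transpose Q"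
proof -
  define X where "X = transpose P ** Q"
  have "mdiag d ** X = transpose P ** (P ** mdiag d ** transpose P) ** Q"
    by (simp add: X_def matrix_mul_assoc[symmetric] orthogonal_cancel_left[OF P])
  also have "\<dots> = X ** mdiag e"
    unfolding eq by (simp add: X_def matrix_mul_assoc[symmetric] orthogonal_matrixD(2)[OF Q])
  finally have dX: "d $ i * X $ i $ j = X $ i $ j * e $ j" for i j
    by (metis mdiag_mult_nth mult_mdiag_nth)
  then have "f (d $ i) * X $ i $ j = X $ i $ j * f (e $ j)" for i j
    using dX[of i j] by (cases "X $ i $ j = 0") auto
  then have FX: "mdiag (\<chi> i. f (d $ i)) ** X = X ** mdiag (\<chi> i. f (e $ i))"
    by (simp add: vec_eq_iff mdiag_mult_nth mult_mdiag_nth)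
  have "P ** mdiag (\<chi> i. f (d $ i)) ** transpose P = P ** mdiag (\<chi> i. f (d $ i)) ** X ** transpose Q"
    by (simp add: X_def matrix_mul_assoc[symmetric] orthogonal_cancel_left[OF Q] orthogonal_matrixD(1)[OF Q])
  also have "\<dots> = P ** X ** mdiag (\<chi> i. f (e $ i)) ** transpose Q"
    by (metis FX matrix_mul_assoc)
  also have "P ** X = Q" by (simp add: X_def orthogonal_cancel_left[OF P])
  finally show ?thesis .
qed

subsection \<open>The matrix exponential and its derivative\<close>

lemma power2_norm_matrix: "(norm (X :: real^'n^'m))\<^sup>2 = (\<Sum>i\<in>UNIV. \<Sum>j\<in>UNIV. (X $ i $ j)\<^sup>2)"
  by (simp only: power2_norm_eq_inner) (simp add: inner_vec_def power2_eq_square)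

lemma norm_matrix_vector_mult_le: "norm ((M :: real^'n^'m) *v x) \<le> norm M * norm x"
proof (rule power2_le_imp_le)
  have "(norm (M *v x))\<^sup>2 = (\<Sum>i\<in>UNIV. (M $ i \<bullet> x)\<^sup>2)"
    by (simp only: power2_norm_eq_inner)
      (simp add: inner_vec_def matrix_vector_mul_component power2_eq_square)
  also have "\<dots> \<le> (\<Sum>i\<in>UNIV. (M $ i \<bullet> M $ i) * (x \<bullet> x))"
    by (intro sum_mono Cauchy_Schwarz_ineq)
  also have "\<dots> = (norm M * norm x)\<^sup>2"
    by (simp add: sum_distrib_right power_mult_distrib power2_norm_eq_inner inner_vec_def)
  finally show "(norm (M *v x))\<^sup>2 \<le> (norm M * norm x)\<^sup>2" .
qed simp

lemma norm_matrix_mult_le: "norm ((X :: real^'n^'m) ** (Y :: real^'p^'n)) \<le> norm X * norm Y"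
proof (rule power2_le_imp_le)
  have "(norm (X ** Y))\<^sup>2 = (\<Sum>i\<in>UNIV. \<Sum>j\<in>UNIV. (X $ i \<bullet> column j Y)\<^sup>2)"
    unfolding power2_norm_matrix by (simp add: matrix_matrix_mult_def inner_vec_def column_def)
  also have "\<dots> \<le> (\<Sum>i\<in>UNIV. \<Sum>j\<in>UNIV. (X $ i \<bullet> X $ i) * (column j Y \<bullet> column j Y))"
    by (intro sum_mono Cauchy_Schwarz_ineq)
  also have "\<dots> = (\<Sum>i\<in>UNIV. X $ i \<bullet> X $ i) * (\<Sum>j\<in>UNIV. column j Y \<bullet> column j Y)"
    by (simp add: sum_product)
  also have "(\<Sum>i\<in>UNIV. X $ i \<bullet> X $ i) = (norm X)\<^sup>2"
    by (simp add: power2_norm_eq_inner inner_vec_def)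
  also have "(\<Sum>j\<in>UNIV. column j Y \<bullet> column j Y) = (\<Sum>j\<in>UNIV. \<Sum>l\<in>UNIV. (Y $ l $ j)\<^sup>2)"
    by (simp add: inner_vec_def column_def power2_eq_square)
  also have "\<dots> = (norm Y)\<^sup>2"
    unfolding power2_norm_matrix by (rule sum.swap)
  finally show "(norm (X ** Y))\<^sup>2 \<le> (norm X * norm Y)\<^sup>2"
    by (simp add: power_mult_distrib)
qed simp

primrec mpow :: "real^'k^'k \<Rightarrow> nat \<Rightarrow> real^'k^'k" where
  "mpow L 0 = mat 1"
| "mpow L (Suc m) = L ** mpow L m"

text \<open>\<open>dmpow L H m\<close> is the derivative of \<open>mpow \<cdot> m\<close> at \<open>L\<close> in direction \<open>H\<close>.\<close>

primrec dmpow :: "real^'k^'k \<Rightarrow> real^'k^'k \<Rightarrow> nat \<Rightarrow> real^'k^'k" where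
  "dmpow L H 0 = 0"
| "dmpow L H (Suc m) = H ** mpow L m + L ** dmpow L H m"

definition mexp :: "real^'k^'k \<Rightarrow> real^'k^'k" where
  "mexp L = (\<Sum>m. (1 / fact m) *\<^sub>R mpow L m)"

definition dmexp :: "real^'k^'k \<Rightarrow> real^'k^'k \<Rightarrow> real^'k^'k" where
  "dmexp L H = (\<Sum>m. (1 / fact m) *\<^sub>R dmpow L H m)"

lemma norm_mpow_le: "norm (mpow (L :: real^'k^'k) m) \<le> norm (mat 1 :: real^'k^'k) * norm L ^ m"
proof (induction m)
  case (Suc m)
  have "norm (mpow L (Suc m)) \<le> norm L * norm (mpow L m)" by (simp add: norm_matrix_mult_le)
  also have "\<dots> \<le> norm L * (norm (mat 1 :: real^'k^'k) * norm L ^ m)"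
    by (intro mult_left_mono Suc.IH) simp
  finally show ?case by (simp add: algebra_simps)
qed simp

lemma norm_dmpow_le:
  "norm (dmpow (L :: real^'k^'k) H m) \<le> norm (mat 1 :: real^'k^'k) * (real m * norm L ^ (m - 1)) * norm H"
proof (induction m)
  case (Suc m)
  let ?c = "norm (mat 1 :: real^'k^'k)"
  have "norm (dmpow L H (Suc m)) \<le> norm H * norm (mpow L m) + norm L * norm (dmpow L H m)"
    by (simp add: norm_triangle_le norm_matrix_mult_le add_mono)
  also have "\<dots> \<le> norm H * (?c * norm L ^ m) + norm L * (?c * (real m * norm L ^ (m - 1)) * norm H)"
    by (intro add_mono mult_left_mono norm_mpow_le Suc.IH) simp_all
  also have "\<dots> = ?c * (real (Suc m) * norm L ^ (Suc m - 1)) * norm H"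
    by (cases m) (simp_all add: algebra_simps)
  finally show ?case .
qed simp

lemma mpow_remainder_Suc:
  "mpow (L + H) (Suc m) - mpow L (Suc m) - dmpow L H (Suc m) =
   (L + H) ** (mpow (L + H) m - mpow L m - dmpow L H m) + H ** dmpow L H m"
  by (simp add: matrix_diff_ldistrib matrix_add_ldistrib matrix_add_rdistrib algebra_simps)

lemma norm_mpow_remainder_le:
  "norm (mpow ((L :: real^'k^'k) + H) m - mpow L m - dmpow L H m) \<le>
     norm (mat 1 :: real^'k^'k) * ((norm L + norm H) ^ m - norm L ^ m - real m * norm L ^ (m - 1) * norm H)"
proof (induction m)
  case (Suc m)
  let ?c = "norm (mat 1 :: real^'k^'k)" and ?l = "norm L" and ?h = "norm H"
  let ?R = "mpow (L + H) m - mpow L m - dmpow L H m"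
  have "norm (mpow (L + H) (Suc m) - mpow L (Suc m) - dmpow L H (Suc m))
        \<le> norm (L + H) * norm ?R + ?h * norm (dmpow L H m)"
    unfolding mpow_remainder_Suc
    by (intro order.trans[OF norm_triangle_ineq] add_mono norm_matrix_mult_le)
  also have "\<dots> \<le> (?l + ?h) * (?c * ((?l + ?h) ^ m - ?l ^ m - real m * ?l ^ (m - 1) * ?h))
        + ?h * (?c * (real m * ?l ^ (m - 1)) * ?h)"
    by (intro add_mono mult_mono Suc.IH norm_dmpow_le norm_triangle_ineq order_refl) auto
  also have "\<dots> = ?c * ((?l + ?h) ^ Suc m - ?l ^ Suc m - real (Suc m) * ?l ^ (Suc m - 1) * ?h)"
    by (cases m) (simp_all add: algebra_simps)
  finally show ?case .
qed simp

lemma sums_norm_comparison: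
  fixes f :: "nat \<Rightarrow> 'a::banach"
  assumes le: "\<And>m. norm (f m) \<le> g m" and g: "g sums s"
  shows "f sums (suminf f)" and "norm (suminf f) \<le> s"
proof -
  have sn: "summable (\<lambda>m. norm (f m))"
    by (rule summable_comparison_test[OF _ sums_summable[OF g]]) (use le in auto)
  then show "f sums (suminf f)" by (rule summable_sums[OF summable_norm_cancel])
  have "norm (suminf f) \<le> (\<Sum>m. norm (f m))" using sn by (rule summable_norm)
  also have "\<dots> \<le> s" using suminf_le[OF le sn sums_summable[OF g]] g by (simp add: sums_iff)
  finally show "norm (suminf f) \<le> s" .
qed

lemma exp_sums_real: "(\<lambda>m. x ^ m / fact m) sums exp (x :: real)"
  using exp_converges[of x] by (simp add: divide_inverse mult.commute)

lemma exp_sums_termwise_deriv: "(\<lambda>m. real m * x ^ (m - 1) / fact m) sums exp (x :: real)"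
proof -
  have "(\<lambda>k. real (Suc k) * x ^ (Suc k - 1) / fact (Suc k)) = (\<lambda>k. x ^ k / fact k)"
    by (simp add: fun_eq_iff fact_Suc divide_simps)
  then have "(\<lambda>k. real (Suc k) * x ^ (Suc k - 1) / fact (Suc k)) sums exp x"
    using exp_sums_real by simp
  then show ?thesis by (subst (asm) sums_Suc_iff) simp
qed

lemma mexp_sums: "(\<lambda>m. (1 / fact m) *\<^sub>R mpow (L :: real^'k^'k) m) sums mexp L"
proof -
  have "norm ((1 / fact m) *\<^sub>R mpow L m) \<le> norm (mat 1 :: real^'k^'k) * (norm L ^ m / fact m)" for m
    using norm_mpow_le[of L m] by (simp add: divide_simps mult.commute)
  from sums_norm_comparison(1)[OF this sums_mult[OF exp_sums_real]] show ?thesis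
    by (simp add: mexp_def)
qed

lemma dmexp_sums_and_bound:
  "(\<lambda>m. (1 / fact m) *\<^sub>R dmpow (L :: real^'k^'k) H m) sums dmexp L H"
  "norm (dmexp L H) \<le> norm H * (norm (mat 1 :: real^'k^'k) * exp (norm L))"
proof -
  let ?c = "norm (mat 1 :: real^'k^'k)"
  have le: "norm ((1 / fact m) *\<^sub>R dmpow L H m) \<le> ?c * norm H * (real m * norm L ^ (m - 1) / fact m)" for m
    using norm_dmpow_le[of L H m] by (simp add: divide_simps mult.commute mult.left_commute)
  note g = sums_mult[OF exp_sums_termwise_deriv, of "?c * norm H"]
  show "(\<lambda>m. (1 / fact m) *\<^sub>R dmpow L H m) sums dmexp L H"
    using sums_norm_comparison(1)[OF le g] by (simp add: dmexp_def)
  show "norm (dmexp L H) \<le> norm H * (?c * exp (norm L))"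
    using sums_norm_comparison(2)[OF le g] by (simp add: dmexp_def mult_ac)
qed

lemma bounded_linear_dmexp: "bounded_linear (dmexp (L :: real^'k^'k))"
proof (rule bounded_linear_intro)
  have "dmpow L (H1 + H2) m = dmpow L H1 m + dmpow L H2 m" for H1 H2 m
    by (induction m) (simp_all add: matrix_add_rdistrib matrix_add_ldistrib algebra_simps)
  then show "dmexp L (H1 + H2) = dmexp L H1 + dmexp L H2" for H1 H2
    using sums_add[OF dmexp_sums_and_bound(1)[of L H1] dmexp_sums_and_bound(1)[of L H2]]
      dmexp_sums_and_bound(1)[of L "H1 + H2"]
    by (simp add: scaleR_add_right sums_unique2)
  have "dmpow L (r *\<^sub>R H) m = r *\<^sub>R dmpow L H m" for r H m
    by (induction m) (simp_all add: matrix_scalar_ac scalar_matrix_assoc algebra_simps)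
  then show "dmexp L (r *\<^sub>R H) = r *\<^sub>R dmexp L H" for r H
    using sums_scaleR_right[OF dmexp_sums_and_bound(1)[of L H], of r]
      dmexp_sums_and_bound(1)[of L "r *\<^sub>R H"]
    by (simp add: sums_unique2)
qed (rule dmexp_sums_and_bound(2))

lemma norm_mexp_remainder_le:
  "norm (mexp (L + H) - mexp L - dmexp L H) \<le>
     norm (mat 1 :: real^'k^'k) * (exp (norm (L :: real^'k^'k) + norm H) - exp (norm L) - exp (norm L) * norm H)"
proof -
  let ?c = "norm (mat 1 :: real^'k^'k)" and ?l = "norm L" and ?h = "norm H"
  let ?R = "\<lambda>m. mpow (L + H) m - mpow L m - dmpow L H m"
  have s: "(\<lambda>m. (1 / fact m) *\<^sub>R ?R m) sums (mexp (L + H) - mexp L - dmexp L H)"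
    using sums_diff[OF sums_diff[OF mexp_sums mexp_sums] dmexp_sums_and_bound(1)]
    by (simp add: scaleR_diff_right)
  have "norm ((1 / fact m) *\<^sub>R ?R m) \<le>
      ?c * (((?l + ?h) ^ m / fact m - ?l ^ m / fact m) - ?h * (real m * ?l ^ (m - 1) / fact m))" for m
  proof -
    have "norm ((1 / fact m) *\<^sub>R ?R m) = norm (?R m) / fact m" by simp
    also have "\<dots> \<le> ?c * ((?l + ?h) ^ m - ?l ^ m - real m * ?l ^ (m - 1) * ?h) / fact m"
      by (rule divide_right_mono[OF norm_mpow_remainder_le]) simp
    also have "\<dots> = ?c * (((?l + ?h) ^ m / fact m - ?l ^ m / fact m) - ?h * (real m * ?l ^ (m - 1) / fact m))"
      by (simp add: field_simps)
    finally show ?thesis .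
  qed
  from sums_norm_comparison(2)[OF this sums_mult[OF sums_diff[OF sums_diff[OF exp_sums_real
          exp_sums_real] sums_mult[OF exp_sums_termwise_deriv]]]]
  show ?thesis using sums_unique[OF s] by (simp add: algebra_simps)
qed

theorem has_derivative_mexp: "(mexp has_derivative dmexp L) (at (L :: real^'k^'k))"
proof -
  let ?c = "norm (mat 1 :: real^'k^'k)" and ?l = "norm L"
  define \<rho> where "\<rho> t = (exp (?l + t) - exp ?l - exp ?l * t) / t" for t
  have "((\<lambda>t. (exp (?l + t) - exp ?l) / t - exp ?l) \<longlongrightarrow> 0) (at 0)"
    using DERIV_exp[of ?l] tendsto_diff[OF _ tendsto_const, of _ "exp ?l" "at 0" "exp ?l"]
    by (simp add: DERIV_def)
  moreover have "\<forall>\<^sub>F t in at 0. (exp (?l + t) - exp ?l) / t - exp ?l = \<rho> t"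
    by (auto simp: eventually_at_filter \<rho>_def divide_simps)
  ultimately have "(\<rho> \<longlongrightarrow> 0) (at 0)" using tendsto_cong by fastforce
  moreover have "filterlim (\<lambda>y. norm (y - L)) (at 0) (at L)"
    unfolding filterlim_at
    by (auto simp: eventually_at_filter intro!: tendsto_norm_zero tendsto_eq_intros)
  ultimately have lim: "((\<lambda>y. ?c * \<rho> (norm (y - L))) \<longlongrightarrow> 0) (at L)"
    using tendsto_mult_right_zero filterlim_compose by blast
  have "((\<lambda>y. norm (mexp y - mexp L - dmexp L (y - L)) / norm (y - L)) \<longlongrightarrow> 0) (at L)"
  proof (rule tendsto_sandwich[OF _ _ tendsto_const lim])
    have "norm (mexp y - mexp L - dmexp L (y - L)) / norm (y - L) \<le> ?c * \<rho> (norm (y - L))" for y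
      using divide_right_mono[OF norm_mexp_remainder_le[of L "y - L"], of "norm (y - L)"]
      by (simp add: \<rho>_def)
    then show "\<forall>\<^sub>F y in at L. norm (mexp y - mexp L - dmexp L (y - L)) / norm (y - L) \<le> ?c * \<rho> (norm (y - L))"
      by simp
  qed simp
  then show ?thesis using bounded_linear_dmexp by (simp add: has_derivative_iff_norm)
qed

lemma sums_vec:
  fixes f :: "nat \<Rightarrow> 'a::real_normed_vector ^ 'n"
  assumes "\<And>i. (\<lambda>m. f m $ i) sums (s $ i)"
  shows "f sums s"
  using assms unfolding sums_def by (intro vec_tendstoI) (simp add: sum_component)

lemma mpow_conj_mdiag:
  assumes P: "orthogonal_matrix P"
  shows "mpow (P ** mdiag a ** transpose P) m = P ** mdiag (\<chi> i. a $ i ^ m) ** transpose P"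
proof (induction m)
  case 0
  have "(\<chi> i. a $ i ^ 0) = 1" by (simp add: vec_eq_iff)
  then show ?case using orthogonal_matrixD(1)[OF P] by (simp add: mdiag_1)
next
  case (Suc m)
  have "(\<chi> i. a $ i ^ Suc m) = a * (\<chi> i. a $ i ^ m)" by (simp add: vec_eq_iff)
  then show ?case using Suc by (simp add: orthogonal_conj_mult[OF P] mdiag_mult_mdiag)
qed

lemma mexp_conj_mdiag:
  assumes P: "orthogonal_matrix P"
  shows "mexp (P ** mdiag a ** transpose P) = P ** mdiag (\<chi> i. exp (a $ i)) ** transpose P"
proof -
  have "(\<lambda>m. (\<chi> i. a $ i ^ m / fact m)) sums (\<chi> i. exp (a $ i))"
    by (rule sums_vec) (simp add: exp_sums_real)
  then have "(\<lambda>m. P ** mdiag (\<chi> i. a $ i ^ m / fact m) ** transpose P)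
      sums (P ** mdiag (\<chi> i. exp (a $ i)) ** transpose P)"
    by (rule bounded_linear.sums[OF bounded_linear_matrix_sandwich
          bounded_linear.sums[OF bounded_linear_mdiag]])
  moreover have "(1 / fact m) *\<^sub>R mpow (P ** mdiag a ** transpose P) m
      = P ** mdiag (\<chi> i. a $ i ^ m / fact m) ** transpose P" for m
  proof -
    have "(\<chi> i. a $ i ^ m / fact m) = (1 / fact m) *\<^sub>R (\<chi> i. a $ i ^ m)" by (simp add: vec_eq_iff)
    then show ?thesis by (simp add: mpow_conj_mdiag[OF P] conj_scaleR mdiag_scaleR)
  qed
  ultimately show ?thesis using mexp_sums[of "P ** mdiag a ** transpose P"] sums_unique2 by simp
qed

text \<open>Divided differences of the power and exponential functions; the derivative of a
  matrix function at \<open>P diag(a) P'\<close> acts on \<open>P M P'\<close> entrywise through them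
  (the Daleckii--Krein formula).\<close>

primrec pow_divdiff :: "nat \<Rightarrow> real \<Rightarrow> real \<Rightarrow> real" where
  "pow_divdiff 0 x y = 0"
| "pow_divdiff (Suc m) x y = y ^ m + x * pow_divdiff m x y"

definition exp_divdiff :: "real \<Rightarrow> real \<Rightarrow> real" where
  "exp_divdiff x y = (if x = y then exp x else (exp x - exp y) / (x - y))"

definition schur_mult :: "(real \<Rightarrow> real \<Rightarrow> real) \<Rightarrow> real^'k \<Rightarrow> real^'k^'k \<Rightarrow> real^'k^'k" where
  "schur_mult q a M = (\<chi> r c. q (a $ r) (a $ c) * M $ r $ c)"

lemma exp_divdiff_commute: "exp_divdiff x y = exp_divdiff y x"
  by (simp add: exp_divdiff_def divide_simps) (simp add: algebra_simps)

lemma exp_divdiff_pos: "exp_divdiff x y > 0"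
  by (cases x y rule: linorder_cases) (auto simp: exp_divdiff_def zero_less_divide_iff)

lemma pow_divdiff_neq:
  assumes "x \<noteq> y"
  shows "pow_divdiff m x y = (x ^ m - y ^ m) / (x - y)"
proof (induction m)
  case (Suc m)
  have "pow_divdiff (Suc m) x y = y ^ m + x * ((x ^ m - y ^ m) / (x - y))"
    using Suc by simp
  also have "\<dots> = (y ^ m * (x - y) + x * (x ^ m - y ^ m)) / (x - y)"
    using assms by (simp add: field_simps)
  also have "y ^ m * (x - y) + x * (x ^ m - y ^ m) = x ^ Suc m - y ^ Suc m"
    by (simp add: algebra_simps)
  finally show ?case .
qed simp

lemma pow_divdiff_diag: "pow_divdiff m x x = real m * x ^ (m - 1)"
  by (induction m) (auto simp: algebra_simps power_eq_if)

lemma pow_divdiff_sums: "(\<lambda>m. pow_divdiff m x y / fact m) sums exp_divdiff x y"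
proof (cases "x = y")
  case True
  then show ?thesis using exp_sums_termwise_deriv[of x] by (simp add: pow_divdiff_diag exp_divdiff_def)
next
  case False
  have "(\<lambda>m. (x ^ m / fact m - y ^ m / fact m) / (x - y)) sums ((exp x - exp y) / (x - y))"
    by (intro sums_divide sums_diff exp_sums_real)
  moreover have "(x ^ m / fact m - y ^ m / fact m) / (x - y) = pow_divdiff m x y / fact m" for m
    using False by (simp add: pow_divdiff_neq divide_simps)
  ultimately show ?thesis using False by (simp add: exp_divdiff_def)
qed

lemma dmpow_conj_mdiag:
  assumes P: "orthogonal_matrix P"
  shows "dmpow (P ** mdiag a ** transpose P) H m =
     P ** schur_mult (pow_divdiff m) a (transpose P ** H ** P) ** transpose P"
proof (induction m)
  case 0
  then show ?case by (simp add: schur_mult_def vec_eq_iff[of _ 0] matrix_matrix_mult_def)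
next
  case (Suc m)
  let ?M = "transpose P ** H ** P"
  have H: "H = P ** ?M ** transpose P"
    by (simp add: matrix_mul_assoc[symmetric] orthogonal_cancel_left[OF P] orthogonal_matrixD(1)[OF P])
  have "dmpow (P ** mdiag a ** transpose P) H (Suc m) =
     (P ** ?M ** transpose P) ** (P ** mdiag (\<chi> i. a $ i ^ m) ** transpose P)
     + (P ** mdiag a ** transpose P) ** (P ** schur_mult (pow_divdiff m) a ?M ** transpose P)"
    using Suc by (simp add: mpow_conj_mdiag[OF P] flip: H)
  also have "\<dots> = P ** (?M ** mdiag (\<chi> i. a $ i ^ m) + mdiag a ** schur_mult (pow_divdiff m) a ?M)
      ** transpose P"
    by (simp add: orthogonal_conj_mult[OF P] conj_add)
  also have "?M ** mdiag (\<chi> i. a $ i ^ m) + mdiag a ** schur_mult (pow_divdiff m) a ?M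
      = schur_mult (pow_divdiff (Suc m)) a ?M"
    by (simp add: vec_eq_iff mdiag_mult_nth mult_mdiag_nth schur_mult_def algebra_simps)
  finally show ?case .
qed

theorem dmexp_conj_mdiag:
  assumes P: "orthogonal_matrix P"
  shows "dmexp (P ** mdiag a ** transpose P) H =
     P ** schur_mult exp_divdiff a (transpose P ** H ** P) ** transpose P"
proof -
  let ?M = "transpose P ** H ** P"
  have "(\<lambda>m. pow_divdiff m x y / fact m * c) sums (exp_divdiff x y * c)" for x y c
    by (rule sums_mult2[OF pow_divdiff_sums])
  then have "(\<lambda>m. schur_mult (\<lambda>x y. pow_divdiff m x y / fact m) a ?M) sums schur_mult exp_divdiff a ?M"
    unfolding schur_mult_def by (intro sums_vec) simp
  then have "(\<lambda>m. P ** schur_mult (\<lambda>x y. pow_divdiff m x y / fact m) a ?M ** transpose P)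
      sums (P ** schur_mult exp_divdiff a ?M ** transpose P)"
    by (rule bounded_linear.sums[OF bounded_linear_matrix_sandwich])
  moreover have "(1 / fact m) *\<^sub>R dmpow (P ** mdiag a ** transpose P) H m
      = P ** schur_mult (\<lambda>x y. pow_divdiff m x y / fact m) a ?M ** transpose P" for m
  proof -
    have "schur_mult (\<lambda>x y. pow_divdiff m x y / fact m) a ?M = (1 / fact m) *\<^sub>R schur_mult (pow_divdiff m) a ?M"
      by (simp add: vec_eq_iff schur_mult_def)
    then show ?thesis by (simp add: dmpow_conj_mdiag[OF P] conj_scaleR)
  qed
  ultimately show ?thesis
    using dmexp_sums_and_bound(1)[of "P ** mdiag a ** transpose P" H] sums_unique2 by simp
qed

lemma matlog_conj_mdiag:
  fixes P :: "real^'k^'k"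
  assumes P: "orthogonal_matrix P" and d: "\<forall>i. d $ i > 0"
  shows "matlog (P ** mdiag d ** transpose P) = P ** mdiag (\<chi> i. ln (d $ i)) ** transpose P"
  unfolding matlog_def
proof (rule the_equality)
  fix L
  assume "\<exists>Q e. orthogonal_matrix Q \<and> (\<forall>i. 0 < e $ i) \<and>
          P ** mdiag d ** transpose P = Q ** mdiag e ** transpose Q \<and>
          L = Q ** mdiag (\<chi> i. ln (e $ i)) ** transpose Q"
  then show "L = P ** mdiag (\<chi> i. ln (d $ i)) ** transpose P"
    using orthogonal_conj_mdiag_fun_eq[OF P, of _ d _ ln] by metis
qed (use P d in blast)

lemma posdef_matlog:
  assumes "posdef B"
  obtains P d where "orthogonal_matrix P" "\<forall>i. d $ i > 0" "B = P ** mdiag d ** transpose P"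
    "matlog B = P ** mdiag (\<chi> i. ln (d $ i)) ** transpose P"
  using posdef_diagonalizable[OF assms] matlog_conj_mdiag by metis

lemma symmetric_matlog: "posdef B \<Longrightarrow> transpose (matlog B) = matlog B"
  by (metis posdef_matlog transpose_conj_mdiag)

lemma mexp_matlog: "posdef B \<Longrightarrow> mexp (matlog B) = B"
proof -
  assume "posdef B"
  then obtain P d where P: "orthogonal_matrix P" and d: "\<forall>i. d $ i > 0"
    and "B = P ** mdiag d ** transpose P" "matlog B = P ** mdiag (\<chi> i. ln (d $ i)) ** transpose P"
    by (rule posdef_matlog)
  moreover have "(\<chi> i. exp ((\<chi> i. ln (d $ i)) $ i)) = d" using d by (simp add: vec_eq_iff)
  ultimately show ?thesis using mexp_conj_mdiag[OF P, of "\<chi> i. ln (d $ i)"] by simp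
qed

lemma matlog_mexp:
  fixes L :: "real^'k^'k"
  assumes "transpose L = L"
  shows "matlog (mexp L) = L"
proof -
  obtain P a where P: "orthogonal_matrix P" and L: "L = P ** mdiag a ** transpose P"
    using symmetric_matrix_diagonalizable[OF assms] by blast
  have "matlog (mexp L) = P ** mdiag (\<chi> i. ln ((\<chi> i. exp (a $ i)) $ i)) ** transpose P"
    unfolding L mexp_conj_mdiag[OF P] by (rule matlog_conj_mdiag[OF P]) simp
  also have "(\<chi> i. ln ((\<chi> i. exp (a $ i)) $ i)) = a" by (simp add: vec_eq_iff)
  finally show ?thesis using L by simp
qed

lemma matlog_mdiag: "\<forall>i. d $ i > 0 \<Longrightarrow> matlog (mdiag d :: real^'k^'k) = mdiag (\<chi> i. ln (d $ i))"
  using matlog_conj_mdiag[OF orthogonal_matrix_id] by simp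

subsection \<open>The matrix logarithm\<close>

lemma norm_orthogonal_matrix: "orthogonal_matrix (P :: real^'k^'k) \<Longrightarrow> norm P = sqrt CARD('k)"
proof -
  assume P: "orthogonal_matrix P"
  have "P $ i \<bullet> P $ i = (P ** transpose P) $ i $ i" for i
    by (simp add: matrix_matrix_mult_def transpose_def inner_vec_def)
  then have "P $ i \<bullet> P $ i = 1" for i by (simp add: orthogonal_matrixD(1)[OF P] mat_def)
  then show ?thesis by (simp add: norm_eq_sqrt_inner inner_vec_def)
qed

lemma norm_mdiag: "norm (mdiag (v :: real^'k)) = norm v"
proof -
  have "(norm (mdiag v))\<^sup>2 = (\<Sum>i\<in>UNIV. \<Sum>j\<in>UNIV. (if j = i then (v $ i)\<^sup>2 else 0))"
    unfolding power2_norm_matrix by (intro sum.cong refl) auto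
  also have "\<dots> = v \<bullet> v" by (simp add: inner_vec_def power2_eq_square)
  also have "\<dots> = (norm v)\<^sup>2" by (simp add: power2_norm_eq_inner)
  finally show ?thesis by (simp add: power2_eq_iff_nonneg)
qed

lemma abs_inner_matrix_vector_le: "\<bar>x \<bullet> ((M :: real^'k^'k) *v x)\<bar> \<le> norm M * (norm x)\<^sup>2"
  using Cauchy_Schwarz_ineq2[of x "M *v x"] norm_matrix_vector_mult_le[of M x]
  by (simp add: power2_eq_square mult_left_mono order_trans mult_ac)

lemma posdef_coercive:
  assumes "posdef (A :: real^'k^'k)"
  obtains \<mu> where "\<mu> > 0" "\<And>x. norm x = 1 \<Longrightarrow> \<mu> \<le> x \<bullet> (A *v x)"
proof -
  have "(axis undefined 1 :: real^'k) \<in> sphere 0 1" by simp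
  moreover have "continuous_on (sphere 0 1) (\<lambda>x :: real^'k. x \<bullet> (A *v x))"
    by (intro continuous_intros linear_continuous_on bounded_linear_matrix_vector_mult)
  ultimately obtain x0 where "x0 \<in> sphere 0 1" "\<And>y. y \<in> sphere 0 1 \<Longrightarrow> x0 \<bullet> (A *v x0) \<le> y \<bullet> (A *v y)"
    using continuous_attains_inf[OF compact_sphere] by blast
  moreover have "x0 \<bullet> (A *v x0) > 0" if "x0 \<in> sphere 0 1"
    using assms that unfolding posdef_def by (metis mem_sphere_0 norm_zero zero_neq_one)
  ultimately show ?thesis using that by auto
qed

text \<open>Near a positive definite \<open>A\<close>, all eigenvalues stay in a compact subinterval of
  \<open>(0, \<infinity>)\<close>, which bounds the logarithm.\<close>

lemma matlog_locally_bounded: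
  assumes "posdef (A :: real^'k^'k)"
  obtains \<delta> R where "\<delta> > 0" "\<And>B. posdef B \<Longrightarrow> norm (B - A) < \<delta> \<Longrightarrow> norm (matlog B) \<le> R"
proof -
  obtain \<mu> where \<mu>: "\<mu> > 0" "\<And>x. norm x = 1 \<Longrightarrow> \<mu> \<le> x \<bullet> (A *v x)"
    using posdef_coercive[OF assms] by blast
  define c where "c = \<bar>ln (\<mu> / 2)\<bar> + \<bar>ln (norm A + \<mu> / 2)\<bar>"
  have "norm (matlog B) \<le> CARD('k) * (CARD('k) * c)" if B: "posdef B" "norm (B - A) < \<mu> / 2" for B
  proof -
    obtain P d where P: "orthogonal_matrix P" and d: "\<forall>i. d $ i > 0"
      and BP: "B = P ** mdiag d ** transpose P" and L: "matlog B = P ** mdiag (\<chi> i. ln (d $ i)) ** transpose P"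
      using posdef_matlog[OF B(1)] by blast
    have "\<bar>ln (d $ i)\<bar> \<le> c" for i
    proof -
      define x where "x = P *v axis i 1"
      have nx: "norm x = 1" and Bx: "B *v x = d $ i *\<^sub>R x"
        using orthogonal_conj_mdiag_eigenvector[OF P] by (auto simp: x_def BP)
      then have di: "d $ i = x \<bullet> (A *v x) + x \<bullet> ((B - A) *v x)"
        by (simp add: matrix_vector_mult_diff_rdistrib inner_diff_right norm_eq_1)
      have "\<bar>x \<bullet> ((B - A) *v x)\<bar> < \<mu> / 2"
        using abs_inner_matrix_vector_le[of x "B - A"] nx B(2) by simp
      moreover have "\<bar>x \<bullet> (A *v x)\<bar> \<le> norm A"
        using abs_inner_matrix_vector_le[of x A] nx by simp
      ultimately have "\<mu> / 2 < d $ i" "d $ i < norm A + \<mu> / 2"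
        using di \<mu>(2)[OF nx] by linarith+
      then have "ln (\<mu> / 2) < ln (d $ i)" "ln (d $ i) < ln (norm A + \<mu> / 2)"
        using \<mu>(1) d by (simp_all add: add_nonneg_pos)
      then show ?thesis unfolding c_def by linarith
    qed
    then have "(\<Sum>i\<in>UNIV. \<bar>(\<chi> i. ln (d $ i)) $ i\<bar>) \<le> CARD('k) * c"
      using sum_mono[of UNIV "\<lambda>i. \<bar>ln (d $ i)\<bar>" "\<lambda>_. c"] by simp
    then have lnd: "norm (\<chi> i. ln (d $ i)) \<le> CARD('k) * c"
      using norm_le_l1_cart order_trans by blast
    have "norm (matlog B) \<le> norm P * norm (mdiag (\<chi> i. ln (d $ i))) * norm (transpose P)"
      unfolding L by (meson norm_matrix_mult_le order_trans mult_right_mono norm_ge_zero)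
    also have "\<dots> = CARD('k) * norm (\<chi> i. ln (d $ i))"
      using P by (simp add: norm_orthogonal_matrix norm_mdiag)
    finally show ?thesis using lnd by (meson mult_left_mono of_nat_0_le_iff order_trans)
  qed
  then show ?thesis using that[of "\<mu> / 2"] \<mu>(1) by auto
qed

text \<open>The exponential is a continuous injection on the compact set of symmetric matrices of
  bounded norm, so its inverse, the logarithm, is continuous on the image.\<close>

theorem tendsto_matlog:
  fixes A :: "real^'k^'k" and g :: "'a \<Rightarrow> real^'k^'k"
  assumes A: "posdef A" and g: "(g \<longlongrightarrow> A) F" and "eventually (\<lambda>e. posdef (g e)) F"
  shows "((\<lambda>e. matlog (g e)) \<longlongrightarrow> matlog A) F"
proof -
  obtain \<delta> R where \<delta>: "\<delta> > 0" and R: "\<And>B. posdef B \<Longrightarrow> norm (B - A) < \<delta> \<Longrightarrow> norm (matlog B) \<le> R"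
    using matlog_locally_bounded[OF A] by blast
  define S where "S = {L :: real^'k^'k. transpose L = L} \<inter> cball 0 R"
  have "closed {L :: real^'k^'k. transpose L = L}"
    by (intro closed_Collect_eq continuous_intros linear_continuous_on bounded_linear_transpose)
  then have "compact S" by (simp add: S_def closed_Int_compact)
  moreover have "continuous_on S mexp"
    using has_derivative_mexp has_derivative_continuous continuous_at_imp_continuous_on by blast
  ultimately have cont: "continuous_on (mexp ` S) matlog"
    using continuous_on_inv matlog_mexp unfolding S_def by blast
  have near: "B \<in> mexp ` S" if "posdef B" "norm (B - A) < \<delta>" for B
    using R[OF that] symmetric_matlog[OF that(1)] mexp_matlog[OF that(1)]
    by (metis (mono_tags, lifting) IntI S_def image_eqI mem_Collect_eq mem_cball_0)
  have "eventually (\<lambda>e. norm (g e - A) < \<delta>) F"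
    using g \<delta> unfolding tendsto_iff dist_norm by blast
  then have "eventually (\<lambda>e. g e \<in> mexp ` S) F"
    using assms(3) by eventually_elim (use near in blast)
  moreover have "A \<in> mexp ` S" using near[OF A] \<delta> by simp
  then have "continuous (at A within mexp ` S) matlog"
    using cont continuous_on_eq_continuous_within by blast
  ultimately show ?thesis using continuous_within_tendsto_compose[OF _ _ g] by blast
qed

subsection \<open>Vectorisation and the matrix \<open>\<Gamma>\<^sub>A\<close>\<close>

definition unvech :: "(real, 'k::{finite,linorder} vh) vec \<Rightarrow> ((real, 'k) vec, 'k) vec" where
  "unvech v = (\<chi> i j. if j \<le> i then v $ Abs_vh (j, i) else v $ Abs_vh (i, j))"

lemma Rep_vh_le: "fst (Rep_vh p) \<le> snd (Rep_vh p)"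
  using Rep_vh[of p] by simp

lemma Rep_Abs_vh: "a \<le> b \<Longrightarrow> Rep_vh (Abs_vh (a, b)) = (a, b)"
  by (simp add: Abs_vh_inverse)

lemma symmetric_unvech: "transpose (unvech v) = unvech v"
  by (auto simp: vec_eq_iff transpose_def unvech_def)

lemma vech_unvech [simp]: "vech (unvech v) = v"
proof -
  have "vech (unvech v) $ p = v $ p" for p
  proof -
    obtain a b where ab: "Rep_vh p = (a, b)" by fastforce
    moreover have "Abs_vh (a, b) = p" using ab Rep_vh_inverse[of p] by simp
    ultimately show ?thesis using Rep_vh_le[of p] by (simp add: vech_def unvech_def)
  qed
  then show ?thesis by (simp add: vec_eq_iff)
qed

lemma unvech_vech: "transpose M = M \<Longrightarrow> unvech (vech M) = M"
  by (auto simp: vec_eq_iff unvech_def vech_def Rep_Abs_vh transpose_def dest: vec_lambda_unique[THEN iffD2])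

lemma unvech_vech_mdiag_sandwich:
  "transpose M = M \<Longrightarrow> unvech (vech (mdiag a ** M ** mdiag a)) = mdiag a ** M ** mdiag a"
  by (simp add: unvech_vech transpose_sandwich_mdiag)

lemma bounded_linear_unvech: "bounded_linear (unvech :: (real, 'k::{finite,linorder} vh) vec \<Rightarrow> _)"
  unfolding linear_conv_bounded_linear[symmetric]
  by (rule linearI) (simp_all add: vec_eq_iff unvech_def)

lemma bounded_linear_vech: "bounded_linear (vech :: ((real, 'k::{finite,linorder}) vec, 'k) vec \<Rightarrow> _)"
  unfolding linear_conv_bounded_linear[symmetric]
  by (rule linearI) (simp_all add: vec_eq_iff vech_def)

lemma bounded_linear_vecm: "bounded_linear (vecm :: real^'k^'k \<Rightarrow> real^('k \<times> 'k))"
  unfolding linear_conv_bounded_linear[symmetric]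
  by (rule linearI) (simp_all add: vec_eq_iff vecm_def)

lemma vecm_add: "vecm (X + Y) = vecm X + vecm Y"
  by (simp add: vec_eq_iff vecm_def)

lemma vecm_diff: "vecm (X - Y) = vecm X - vecm Y"
  by (simp add: vec_eq_iff vecm_def)

lemma dupmat_mult_vector: "dupmat *v v = vecm (unvech v)"
proof -
  have "(dupmat *v v) $ (c, r) = vecm (unvech v) $ (c, r)" for c r
  proof -
    define u0 where "u0 = (if c \<le> r then Abs_vh (c, r) else Abs_vh (r, c))"
    have iff: "((c, r) = Rep_vh u \<or> (c, r) = prod.swap (Rep_vh u)) \<longleftrightarrow> u = u0" for u
    proof -
      obtain a b where ab: "Rep_vh u = (a, b)" by fastforce
      have le: "a \<le> b" using ab Rep_vh_le[of u] by simp
      have u: "u = Abs_vh (a, b)" using ab Rep_vh_inverse[of u] by simp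
      show ?thesis
      proof
        assume "(c, r) = Rep_vh u \<or> (c, r) = prod.swap (Rep_vh u)"
        then show "u = u0" using ab le u unfolding u0_def by auto
      qed (auto simp: u0_def Rep_Abs_vh)
    qed
    have "(dupmat *v v) $ (c, r) = (\<Sum>u\<in>UNIV. (if (c, r) = Rep_vh u \<or> (c, r) = prod.swap (Rep_vh u) then 1 else 0) * v $ u)"
      by (simp add: matrix_vector_mult_def dupmat_def)
    also have "\<dots> = (\<Sum>u\<in>UNIV. if u = u0 then v $ u0 else 0)"
      by (rule sum.cong) (auto simp: iff)
    also have "\<dots> = vecm (unvech v) $ (c, r)"
      by (auto simp: u0_def vecm_def unvech_def)
    finally show ?thesis .
  qed
  then show ?thesis by (simp add: vec_eq_iff)
qed

lemma Edmat_mult_vecm: "Edmat *v vecm H = (\<chi> k. H $ k $ k)"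
proof -
  have "(Edmat *v vecm H) $ i = H $ i $ i" for i
  proof -
    have "(Edmat *v vecm H) $ i = (\<Sum>p\<in>UNIV. Edmat $ i $ p * vecm H $ p)"
      by (simp add: matrix_vector_mult_def)
    also have "\<dots> = (\<Sum>p\<in>UNIV. if p = (i, i) then vecm H $ (i, i) else 0)"
      by (rule sum.cong) (auto simp: Edmat_def)
    finally show ?thesis by (simp add: vecm_def)
  qed
  then show ?thesis by (simp add: vec_eq_iff)
qed

lemma vector_mult_Edmat: "y v* Edmat = vecm (mdiag y)"
proof -
  have "(y v* Edmat) $ (c, r) = vecm (mdiag y) $ (c, r)" for c r
  proof -
    have "(y v* Edmat) $ (c, r) = (\<Sum>i\<in>UNIV. if i = c \<and> c = r then y $ c else 0)"
      by (simp add: vector_matrix_mult_def Edmat_def, rule sum.cong) auto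
    then show ?thesis by (auto simp: vecm_def)
  qed
  then show ?thesis by (simp add: vec_eq_iff)
qed

lemma kron_mult_vecm: "kron P Q *v vecm X = vecm (Q ** X ** transpose P)"
proof -
  have "(kron P Q *v vecm X) $ (a, b) = vecm (Q ** X ** transpose P) $ (a, b)" for a b
  proof -
    have "(kron P Q *v vecm X) $ (a, b) = (\<Sum>c\<in>UNIV. \<Sum>d\<in>UNIV. P $ a $ c * Q $ b $ d * X $ d $ c)"
      by (simp add: matrix_vector_mult_def kron_def vecm_def sum.cartesian_product case_prod_unfold)
    also have "\<dots> = (\<Sum>c\<in>UNIV. (\<Sum>d\<in>UNIV. Q $ b $ d * X $ d $ c) * P $ a $ c)"
      by (simp add: sum_distrib_right sum_distrib_left mult_ac)
    finally show ?thesis by (simp add: vecm_def matrix_matrix_mult_def transpose_def)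
  qed
  then show ?thesis by (simp add: vec_eq_iff)
qed

lemma transpose_kron: "transpose (kron P Q) = kron (transpose P) (transpose Q)"
  by (simp add: vec_eq_iff kron_def transpose_def)

lemma Xi_nth: "Xi a $ p = exp_divdiff (a $ fst p) (a $ snd p)"
  by (simp add: Xi_def exp_divdiff_def)

lemma Xi_mult_vecm: "Xi a * vecm M = vecm (schur_mult exp_divdiff a M)"
  by (simp add: vec_eq_iff Xi_nth vecm_def schur_mult_def exp_divdiff_commute)

lemma GammaA_spec:
  assumes "posdef A"
  obtains P a where "orthogonal_matrix P" "matlog A = P ** mdiag a ** transpose P"
    "GammaA A = kron P P ** mdiag (Xi a) ** transpose (kron P P)"
proof -
  obtain P d where "orthogonal_matrix P" "matlog A = P ** mdiag (\<chi> i. ln (d $ i)) ** transpose P"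
    using posdef_matlog[OF assms] by blast
  then have "\<exists>G P a. orthogonal_matrix P \<and> matlog A = P ** mdiag a ** transpose P \<and>
       G = kron P P ** mdiag (Xi a) ** transpose (kron P P)" by blast
  then have "\<exists>P a. orthogonal_matrix P \<and> matlog A = P ** mdiag a ** transpose P \<and>
       GammaA A = kron P P ** mdiag (Xi a) ** transpose (kron P P)"
    unfolding GammaA_def by (rule someI_ex)
  then show ?thesis using that by blast
qed

lemma GammaA_mult_vecm:
  assumes "posdef A"
  shows "GammaA A *v vecm H = vecm (dmexp (matlog A) H)"
proof -
  obtain P a where P: "orthogonal_matrix P" and L: "matlog A = P ** mdiag a ** transpose P"
    and G: "GammaA A = kron P P ** mdiag (Xi a) ** transpose (kron P P)"
    using GammaA_spec[OF assms] .
  have "GammaA A *v vecm H = kron P P *v (Xi a * (kron (transpose P) (transpose P) *v vecm H))"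
    by (simp add: G matrix_vector_mul_assoc[symmetric] mdiag_mult_vector transpose_kron)
  also have "\<dots> = vecm (P ** schur_mult exp_divdiff a (transpose P ** H ** P) ** transpose P)"
    by (simp add: kron_mult_vecm Xi_mult_vecm)
  finally show ?thesis by (simp add: L dmexp_conj_mdiag[OF P])
qed

lemma GammaA_nonneg:
  assumes "posdef A"
  shows "0 \<le> y \<bullet> (GammaA A *v y)"
proof -
  obtain P a where G: "GammaA A = kron P P ** mdiag (Xi a) ** transpose (kron P P)"
    using GammaA_spec[OF assms] by blast
  define w where "w = transpose (kron P P) *v y"
  have "y \<bullet> (GammaA A *v y) = w \<bullet> (Xi a * w)"
    by (simp add: G w_def matrix_vector_mul_assoc[symmetric] mdiag_mult_vector
        dot_lmul_matrix[symmetric])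
  also have "\<dots> = (\<Sum>p\<in>UNIV. Xi a $ p * (w $ p)\<^sup>2)"
    by (simp add: inner_vec_def power2_eq_square algebra_simps)
  also have "\<dots> \<ge> 0"
    by (intro sum_nonneg mult_nonneg_nonneg) (simp_all add: Xi_nth less_imp_le[OF exp_divdiff_pos])
  finally show ?thesis .
qed

subsection \<open>Differentiating the parametrisation\<close>

lemma invertible_mdiag_plus_congruence:
  fixes E :: "real^'m^'k" and G :: "real^'m^'m"
  assumes \<phi>: "\<forall>k. \<phi> $ k > 0" and G: "\<forall>y. 0 \<le> y \<bullet> (G *v y)"
  shows "invertible (mdiag \<phi> + E ** G ** transpose E)"
proof -
  let ?N = "mdiag \<phi> + E ** G ** transpose E"
  have z: "x = 0" if "?N *v x = 0" for x
  proof -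
    have "?N *v x = \<phi> * x + E *v (G *v (transpose E *v x))"
      by (simp add: matrix_vector_mult_add_rdistrib mdiag_mult_vector flip: matrix_vector_mul_assoc)
    then have eq: "\<phi> * x + E *v (G *v (transpose E *v x)) = 0" using that by simp
    have "0 = x \<bullet> (\<phi> * x + E *v (G *v (transpose E *v x)))" by (simp only: eq inner_zero_right)
    also have "\<dots> = x \<bullet> (\<phi> * x) + x \<bullet> (E *v (G *v (transpose E *v x)))"
      by (rule inner_add_right)
    finally have "0 = x \<bullet> (\<phi> * x) + x \<bullet> (E *v (G *v (transpose E *v x)))" .
    also have "x \<bullet> (E *v (G *v (transpose E *v x))) = (transpose E *v x) \<bullet> (G *v (transpose E *v x))"
      by (simp add: dot_lmul_matrix[symmetric])
    finally have "x \<bullet> (\<phi> * x) \<le> 0"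
      using G[rule_format, of "transpose E *v x"] by linarith
    then have s: "(\<Sum>k\<in>UNIV. \<phi> $ k * (x $ k)\<^sup>2) \<le> 0"
      by (simp add: inner_vec_def power2_eq_square algebra_simps)
    have nn: "\<forall>k\<in>UNIV. 0 \<le> \<phi> $ k * (x $ k)\<^sup>2" using \<phi> by (simp add: less_imp_le)
    then have "\<forall>k\<in>UNIV. \<phi> $ k * (x $ k)\<^sup>2 = 0"
      using s sum_nonneg_eq_0_iff[of UNIV "\<lambda>k. \<phi> $ k * (x $ k)\<^sup>2"] sum_nonneg[of UNIV] by force
    then show "x = 0" using \<phi> by (simp add: vec_eq_iff) (metis less_irrefl)
  qed
  have "inj ((*v) ?N)"
  proof (rule injI)
    fix x y assume "?N *v x = ?N *v y"
    then have "?N *v (x - y) = 0" by (simp add: matrix_vector_mult_diff_distrib)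
    then have "x - y = 0" by (rule z)
    then show "x = y" by simp
  qed
  then obtain B where "B ** ?N = mat 1" using matrix_left_invertible_injective by blast
  then show ?thesis using invertible_left_inverse by blast
qed

text \<open>In the inverse derivative the diagonal correction \<open>t\<close> is defined implicitly, by
  \<open>\<phi> t = diag(dA)\<close> with \<open>vec(dA) = \<Gamma>\<^sub>A (z - E\<^sub>d' t)\<close>; solving for \<open>t\<close> is where
  \<open>(\<Phi> + E\<^sub>d \<Gamma>\<^sub>A E\<^sub>d')\<^sup>-\<^sup>1\<close> enters \<open>\<Pi>\<^sub>A\<close>.\<close>

lemma diag_constraint_iff:
  fixes E :: "real^'m^'k" and G :: "real^'m^'m"
  assumes "invertible (mdiag \<phi> + E ** G ** transpose E)"
  shows "E *v (G *v (z - transpose E *v t)) = \<phi> * t \<longleftrightarrow>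
    t = matrix_inv (mdiag \<phi> + E ** G ** transpose E) *v (E *v (G *v z))"
proof -
  let ?N = "mdiag \<phi> + E ** G ** transpose E"
  have "?N *v t = \<phi> * t + E *v (G *v (transpose E *v t))"
    by (simp add: matrix_vector_mult_add_rdistrib mdiag_mult_vector flip: matrix_vector_mul_assoc)
  then have "E *v (G *v (z - transpose E *v t)) = \<phi> * t \<longleftrightarrow> ?N *v t = E *v (G *v z)"
    by (simp add: matrix_vector_mult_diff_distrib) (metis add.commute diff_eq_eq)
  also have "\<dots> \<longleftrightarrow> t = matrix_inv ?N *v (E *v (G *v z))"
  proof
    assume "?N *v t = E *v (G *v z)"
    then show "t = matrix_inv ?N *v (E *v (G *v z))"
      using matrix_inv_invertible(2)[OF assms] by (metis matrix_vector_mul_assoc matrix_vector_mul_lid)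
  next
    assume "t = matrix_inv ?N *v (E *v (G *v z))"
    then show "?N *v t = E *v (G *v z)"
      using matrix_inv_invertible(1)[OF assms] by (metis matrix_vector_mul_assoc matrix_vector_mul_lid)
  qed
  finally show ?thesis .
qed

lemma has_derivative_vec_lambda:
  assumes "\<And>i. ((\<lambda>x. f x i) has_derivative (\<lambda>h. f' h i)) F"
  shows "((\<lambda>x. (\<chi> i. f x i) :: real^'n) has_derivative (\<lambda>h. \<chi> i. f' h i)) F"
proof -
  have "(\<chi> i. c i) = (\<Sum>i\<in>UNIV. c i *\<^sub>R axis i (1::real))" for c :: "'n \<Rightarrow> real"
    by (simp add: vec_eq_iff axis_def if_distrib if_distribR cong: if_cong)
  then show ?thesis by (simp only:) (intro has_derivative_sum has_derivative_scaleR_left assms)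
qed

definition phivec :: "('k::finite \<Rightarrow> nat) \<Rightarrow> real^'k^'k \<Rightarrow> real^'k" where
  "phivec n A = (\<chi> k. lam n A $ k * (real (n k) - 1))"

lemma phivec_pos:
  assumes "\<forall>k. n k \<ge> 2" and "\<forall>k. lam n A $ k > 0"
  shows "\<forall>k. phivec n A $ k > 0"
proof
  fix k
  have "real (n k) - 1 > 0" using assms(1)[rule_format, of k] by simp
  then show "phivec n A $ k > 0" using assms(2) by (simp add: phivec_def)
qed

lemma has_derivative_ln_lam:
  fixes n :: "'k::finite \<Rightarrow> nat"
  assumes n2: "\<forall>k. n k \<ge> 2" and lam: "\<forall>k. lam n A $ k > 0"
  shows "((\<lambda>B. \<chi> k. ln (lam n B $ k)) has_derivative (\<lambda>H. \<chi> k. - H $ k $ k / phivec n A $ k)) (at A)"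
proof (rule has_derivative_vec_lambda)
  fix k
  define c where "c = real (n k)"
  have c: "c - 1 > 0" using n2[rule_format, of k] by (simp add: c_def)
  have \<phi>: "phivec n A $ k = c - A $ k $ k" using c by (simp add: phivec_def lam_def c_def)
  have "phivec n A $ k > 0" using phivec_pos[OF n2 lam] by blast
  then have pos: "(c - A $ k $ k) / (c - 1) > 0" using c \<phi> by simp
  have "((\<lambda>t. (c - t) / (c - 1)) has_real_derivative (0 - 1) / (c - 1)) (at (A $ k $ k))"
    by (intro DERIV_cdivide DERIV_diff DERIV_const DERIV_ident)
  from DERIV_chain2[OF DERIV_ln[OF pos] this]
  have "((\<lambda>t. ln ((real (n k) - t) / (real (n k) - 1))) has_real_derivative
      - 1 / phivec n A $ k) (at (A $ k $ k))"
    using c pos unfolding \<phi> c_def[symmetric] by (simp add: field_simps)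
  moreover have "bounded_linear (\<lambda>B :: real^'k^'k. B $ k $ k)"
    by (intro bounded_linear_compose[OF bounded_linear_vec_nth bounded_linear_vec_nth])
  ultimately show "((\<lambda>B. ln (lam n B $ k)) has_derivative (\<lambda>H. - H $ k $ k / phivec n A $ k)) (at A)"
    using has_derivative_compose[OF bounded_linear_imp_has_derivative
        has_field_derivative_imp_has_derivative]
    by (fastforce simp: lam_def)
qed

lemma Lamn_inverse:
  assumes "\<forall>k. n k \<ge> 2"
  shows "Lamn n ** matrix_inv (Lamn n) = mat 1" and "matrix_inv (Lamn n) ** Lamn n = mat 1"
    and "matrix_inv (Lamn n) = mdiag (\<chi> k. 1 / sqrt (real (n k)))"
proof -
  have "sqrt (real (n k)) \<noteq> 0" for k using assms by (metis not_numeral_le_zero of_nat_0_eq_iff real_sqrt_eq_zero_cancel_iff le_zero_eq)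
  then show inv: "matrix_inv (Lamn n) = mdiag (\<chi> k. 1 / sqrt (real (n k)))"
    unfolding Lamn_def by (simp add: matrix_inv_mdiag)
  show "Lamn n ** matrix_inv (Lamn n) = mat 1" "matrix_inv (Lamn n) ** Lamn n = mat 1"
    unfolding inv unfolding Lamn_def using \<open>\<And>k. sqrt (real (n k)) \<noteq> 0\<close>
    by (simp_all add: mdiag_mult_mdiag mdiag_1[symmetric] vec_eq_iff)
qed

definition eta_of_log :: "('k::{finite,linorder} \<Rightarrow> nat) \<Rightarrow> (real, 'k vh) vec \<Rightarrow> (real, 'k vh) vec" where
  "eta_of_log n v = vech (matrix_inv (Lamn n) **
     (unvech v - mdiag (\<chi> k. ln (lam n (mexp (unvech v)) $ k))) ** matrix_inv (Lamn n))"

definition eta_of_log_deriv ::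
    "('k::{finite,linorder} \<Rightarrow> nat) \<Rightarrow> ((real, 'k) vec, 'k) vec \<Rightarrow> (real, 'k vh) vec \<Rightarrow> (real, 'k vh) vec" where
  "eta_of_log_deriv n A w = vech (matrix_inv (Lamn n) **
     (unvech w + mdiag (\<chi> k. dmexp (matlog A) (unvech w) $ k $ k / phivec n A $ k)) ** matrix_inv (Lamn n))"

definition log_of_eta_deriv ::
    "('k::{finite,linorder} \<Rightarrow> nat) \<Rightarrow> ((real, 'k) vec, 'k) vec \<Rightarrow> (real, 'k vh) vec \<Rightarrow> (real, 'k vh) vec" where
  "log_of_eta_deriv n A e = vech (Lamn n ** unvech e ** Lamn n -
     mdiag (matrix_inv (Phimat n A + Edmat ** GammaA A ** transpose Edmat) *v
       (Edmat *v (GammaA A *v vecm (Lamn n ** unvech e ** Lamn n)))))"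

lemma eta_of_log_vech_matlog:
  assumes "posdef B" "\<forall>k. lam n B $ k > 0"
  shows "eta_of_log n (vech (matlog B)) = etaOf n B"
  using assms by (simp add: eta_of_log_def etaOf_def unvech_vech symmetric_matlog mexp_matlog
      matlog_mdiag)

lemma has_derivative_eta_of_log:
  assumes n2: "\<forall>k. n k \<ge> 2" and A: "posdef A" and lam: "\<forall>k. lam n A $ k > 0"
  shows "(eta_of_log n has_derivative eta_of_log_deriv n A) (at (vech (matlog A)))"
proof -
  let ?v = "vech (matlog A)"
  have uv: "unvech ?v = matlog A" by (rule unvech_vech[OF symmetric_matlog[OF A]])
  have "(mexp has_derivative dmexp (matlog A)) (at (unvech ?v))"
    unfolding uv by (rule has_derivative_mexp)
  from has_derivative_compose[OF bounded_linear_imp_has_derivative[OF bounded_linear_unvech] this]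
  have "((\<lambda>v. mexp (unvech v)) has_derivative (\<lambda>w. dmexp (matlog A) (unvech w))) (at ?v)" .
  moreover have "((\<lambda>B. \<chi> k. ln (lam n B $ k)) has_derivative (\<lambda>H. \<chi> k. - H $ k $ k / phivec n A $ k))
      (at (mexp (unvech ?v)))"
    unfolding uv mexp_matlog[OF A] by (rule has_derivative_ln_lam[OF n2 lam])
  ultimately have "((\<lambda>v. \<chi> k. ln (lam n (mexp (unvech v)) $ k)) has_derivative
      (\<lambda>w. \<chi> k. - dmexp (matlog A) (unvech w) $ k $ k / phivec n A $ k)) (at ?v)"
    by (rule has_derivative_compose)
  then have "((\<lambda>v. unvech v - mdiag (\<chi> k. ln (lam n (mexp (unvech v)) $ k))) has_derivative
      (\<lambda>w. unvech w - mdiag (\<chi> k. - dmexp (matlog A) (unvech w) $ k $ k / phivec n A $ k))) (at ?v)"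
    by (intro has_derivative_diff bounded_linear_imp_has_derivative[OF bounded_linear_unvech]
        bounded_linear.has_derivative[OF bounded_linear_mdiag])
  then have "((\<lambda>v. unvech v - mdiag (\<chi> k. ln (lam n (mexp (unvech v)) $ k))) has_derivative
      (\<lambda>w. unvech w + mdiag (\<chi> k. dmexp (matlog A) (unvech w) $ k $ k / phivec n A $ k))) (at ?v)"
    by (rule has_derivative_eq_rhs) (simp add: fun_eq_iff vec_eq_iff)
  then show ?thesis
    unfolding eta_of_log_def[abs_def] eta_of_log_deriv_def[abs_def]
    by (rule bounded_linear.has_derivative[OF bounded_linear_compose[OF bounded_linear_vech
          bounded_linear_matrix_sandwich]])
qed

context
  fixes n :: "'k::{finite,linorder} \<Rightarrow> nat" and A :: "((real, 'k) vec, 'k) vec"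
  assumes n2: "\<forall>k. n k \<ge> 2" and A: "posdef A" and lam: "\<forall>k. lam n A $ k > 0"
begin

lemma invertible_Phimat_plus_GammaA: "invertible (Phimat n A + Edmat ** GammaA A ** transpose Edmat)"
  unfolding Phimat_def phivec_def[symmetric]
  by (rule invertible_mdiag_plus_congruence[OF phivec_pos[OF n2 lam]]) (simp add: GammaA_nonneg[OF A])

lemma unvech_vech_Lamn_inv_sandwich:
  assumes "transpose M = M"
  shows "unvech (vech (matrix_inv (Lamn n) ** M ** matrix_inv (Lamn n))) =
    matrix_inv (Lamn n) ** M ** matrix_inv (Lamn n)"
  unfolding Lamn_inverse(3)[OF n2] unfolding Lamn_def by (simp add: unvech_vech_mdiag_sandwich assms)

lemma log_of_eta_deriv_inverse: "log_of_eta_deriv n A (eta_of_log_deriv n A w) = w"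
proof -
  let ?L = "Lamn n" and ?G = "GammaA A" and ?E = "Edmat :: ((real, 'k \<times> 'k) vec, 'k) vec"
  define S where "S = unvech w"
  define D where "D = dmexp (matlog A) S"
  define t where "t = (\<chi> k. D $ k $ k / phivec n A $ k)"
  define M where "M = S + mdiag t"
  have "transpose M = M" by (simp add: M_def S_def transpose_add symmetric_unvech)
  then have LM: "?L ** unvech (eta_of_log_deriv n A w) ** ?L = M"
    by (simp add: eta_of_log_deriv_def S_def[symmetric] D_def[symmetric] t_def[symmetric]
        M_def[symmetric] unvech_vech_Lamn_inv_sandwich matrix_mul_assoc Lamn_inverse(1)[OF n2])
      (simp add: matrix_mul_assoc[symmetric] Lamn_inverse(1,2)[OF n2])
  have "?E *v (?G *v (vecm M - transpose ?E *v t)) = phivec n A * t"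
    using phivec_pos[OF n2 lam]
    by (simp add: M_def vecm_add vector_mult_Edmat GammaA_mult_vecm[OF A] Edmat_mult_vecm
        D_def t_def vec_eq_iff less_imp_neq[symmetric])
  then have "t = matrix_inv (Phimat n A + ?E ** ?G ** transpose ?E) *v (?E *v (?G *v vecm M))"
    using diag_constraint_iff invertible_Phimat_plus_GammaA unfolding Phimat_def phivec_def[symmetric]
    by blast
  then show ?thesis by (simp add: log_of_eta_deriv_def LM M_def S_def)
qed

lemma bounded_linear_log_of_eta_deriv: "bounded_linear (log_of_eta_deriv n A)"
  unfolding log_of_eta_deriv_def[abs_def]
  by (intro bounded_linear_compose[OF bounded_linear_vech] bounded_linear_sub
      bounded_linear_compose[OF bounded_linear_matrix_sandwich bounded_linear_unvech]
      bounded_linear_compose[OF bounded_linear_mdiag] bounded_linear_compose[OF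
        bounded_linear_matrix_vector_mult] bounded_linear_compose[OF bounded_linear_vecm])

lemma PiA_mult_vector: "PiA n A *v e = vecm (dmexp (matlog A) (unvech (log_of_eta_deriv n A e)))"
proof -
  let ?L = "Lamn n" and ?G = "GammaA A" and ?E = "Edmat :: ((real, 'k \<times> 'k) vec, 'k) vec"
  define z where "z = vecm (?L ** unvech e ** ?L)"
  define q where "q = matrix_inv (Phimat n A + ?E ** ?G ** transpose ?E) *v (?E *v (?G *v z))"
  have "transpose (?L ** unvech e ** ?L - mdiag q) = ?L ** unvech e ** ?L - mdiag q"
    by (simp add: transpose_diff transpose_sandwich_mdiag symmetric_unvech Lamn_def)
  then have "unvech (log_of_eta_deriv n A e) = ?L ** unvech e ** ?L - mdiag q"
    by (simp add: log_of_eta_deriv_def z_def[symmetric] q_def[symmetric] unvech_vech)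
  then have "vecm (dmexp (matlog A) (unvech (log_of_eta_deriv n A e))) = ?G *v z - ?G *v (transpose ?E *v q)"
    by (simp add: GammaA_mult_vecm[OF A, symmetric] vecm_diff z_def vector_mult_Edmat
        matrix_vector_mult_diff_distrib)
  moreover have "kron ?L ?L *v (dupmat *v e) = z"
    by (simp add: dupmat_mult_vector kron_mult_vecm z_def Lamn_def)
  ultimately show ?thesis
    by (simp add: PiA_def q_def matrix_vector_mult_diff_rdistrib flip: matrix_vector_mul_assoc)
qed

end

lemma has_derivative_vech_matlog_local_inverse:
  fixes n :: "'k::{finite,linorder} \<Rightarrow> nat"
    and A :: "((real, 'k) vec, 'k) vec"
    and g :: "(real, 'k vh) vec \<Rightarrow> ((real, 'k) vec, 'k) vec"
  assumes n2: "\<forall>k. n k \<ge> 2" and A: "posdef A" and lam: "\<forall>k. lam n A $ k > 0"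
    and gA: "g (etaOf n A) = A" and gcont: "continuous (at (etaOf n A)) g"
    and ginv: "\<forall>\<^sub>F e in nhds (etaOf n A).
                 posdef (g e) \<and> (\<forall>k. lam n (g e) $ k > 0) \<and> etaOf n (g e) = e"
  shows "((\<lambda>e. vech (matlog (g e))) has_derivative log_of_eta_deriv n A) (at (etaOf n A))"
proof -
  obtain T where T: "open T" "etaOf n A \<in> T"
    and gT: "\<And>e. e \<in> T \<Longrightarrow> posdef (g e) \<and> (\<forall>k. lam n (g e) $ k > 0) \<and> etaOf n (g e) = e"
    using ginv unfolding eventually_nhds by blast
  have "\<forall>\<^sub>F e in at (etaOf n A). posdef (g e)"
    using T gT unfolding eventually_at_topological by blast
  with A gcont gA have "((\<lambda>e. matlog (g e)) \<longlongrightarrow> matlog A) (at (etaOf n A))"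
    by (intro tendsto_matlog) (auto simp: continuous_at)
  then have cont: "continuous (at (etaOf n A)) (\<lambda>e. vech (matlog (g e)))"
    unfolding continuous_at gA by (rule bounded_linear.tendsto[OF bounded_linear_vech])
  have inv: "log_of_eta_deriv n A \<circ> eta_of_log_deriv n A = id"
    by (simp add: fun_eq_iff log_of_eta_deriv_inverse[OF n2 A lam])
  have "eta_of_log n (vech (matlog (g e))) = e" if "e \<in> T" for e
    using gT[OF that] by (simp add: eta_of_log_vech_matlog)
  moreover have "(eta_of_log n has_derivative eta_of_log_deriv n A) (at (vech (matlog (g (etaOf n A)))))"
    unfolding gA by (rule has_derivative_eta_of_log[OF n2 A lam])
  ultimately show ?thesis
    using has_derivative_inverse_basic[OF _ bounded_linear_log_of_eta_deriv[OF n2 A lam] inv cont T]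
    by blast
qed

theorem lemma1:
  fixes n :: "'k::{finite,linorder} \<Rightarrow> nat"
    and A :: "((real, 'k) vec, 'k) vec"
    and g :: "(real, 'k vh) vec \<Rightarrow> ((real, 'k) vec, 'k) vec"
  assumes n2: "\<forall>k. n k \<ge> 2"
    and Apd: "posdef A"
    and lampos: "\<forall>k. lam n A $ k > 0"
    and gA: "g (etaOf n A) = A"
    and gcont: "continuous (at (etaOf n A)) g"
    and ginv: "\<forall>\<^sub>F e in nhds (etaOf n A).
                 posdef (g e) \<and> (\<forall>k. lam n (g e) $ k > 0) \<and> etaOf n (g e) = e"
  shows "((\<lambda>e. vecm (g e)) has_derivative (\<lambda>h. PiA n A *v h)) (at (etaOf n A))"
proof -
  let ?h = "\<lambda>e. vech (matlog (g e))"
  have "(mexp has_derivative dmexp (matlog A)) (at (unvech (?h (etaOf n A))))"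
    using unvech_vech[OF symmetric_matlog[OF Apd]] gA has_derivative_mexp by simp
  from has_derivative_compose[OF bounded_linear.has_derivative[OF bounded_linear_unvech
        has_derivative_vech_matlog_local_inverse[OF assms]] this]
  have "((\<lambda>e. vecm (mexp (unvech (?h e)))) has_derivative (\<lambda>h. PiA n A *v h)) (at (etaOf n A))"
    unfolding PiA_mult_vector[OF n2 Apd lampos] by (rule bounded_linear.has_derivative[OF bounded_linear_vecm])
  moreover have "\<forall>\<^sub>F e in at (etaOf n A). vecm (mexp (unvech (?h e))) = vecm (g e)"
    using ginv unfolding eventually_at_filter
    by eventually_elim (simp add: unvech_vech symmetric_matlog mexp_matlog)
  moreover have "vecm (mexp (unvech (?h (etaOf n A)))) = vecm (g (etaOf n A))"
    using gA Apd by (simp add: unvech_vech symmetric_matlog mexp_matlog)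
  ultimately show ?thesis by (rule has_derivative_transform_eventually) simp
qed

end
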